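(* Let $\mathcal R$ be a Riemann surface, $f:\mathcal R\to\mathrm{Nil}_3$ a conformal minimal immersion which is nowhere vertical with upward normal, and $g:\mathcal R\to\mathbb D=\{|w|<1\}\cong\mathbb H^2$ its normal Gauss map. Let $\gamma\in\mathrm{Aut}(\mathcal R)$. (a) If $f\circ\gamma=\rho\circ f$ for some $\rho=(p,e^{i\theta})\in\mathrm{Iso}_\circ(\mathrm{Nil}_3)$, then $g\circ\gamma=e^{i\theta}g$, i.e. $g$ is symmetric with respect to $(\gamma,R)$ where $R$ is the rotation of $\mathbb H^2$ about $0$ by the angle $\theta$ of the fiber rotation of $\rho$. (b) Conversely, if $g\circ\gamma=e^{i\theta}g$ for some $\theta\in\mathbb R$ (i.e. $g\circ\gamma=R\circ g$ with $R$ a rotation about $0$), then there exists $\rho\in\mathrm{Iso}_\circ(\mathrm{Nil}_3)$ whose fiber rotation has angle $\theta$ such that $f\circ\gamma=\rho\circ f$.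
   Context: $\mathrm{Nil}_3$ denotes $\mathbb R^3$ with the group law $(a_1,a_2,a_3)\cdot(x_1,x_2,x_3)=(a_1+x_1,a_2+x_2,a_3+x_3+\tfrac12(a_1x_2-a_2x_1))$ and the left-invariant Riemannian metric $dx_1^2+dx_2^2+(dx_3+\tfrac12(x_2dx_1-x_1dx_2))^2$; its center is $\{(0,0,c):c\in\mathbb R\}$. The identity component of its isometry group is $\mathrm{Iso}_\circ(\mathrm{Nil}_3)\cong\mathrm{Nil}_3\rtimes\mathrm U_1$, where $(a,e^{i\theta})$ acts by $(a,e^{i\theta}).(x_1,x_2,x_3)=a\cdot(\cos\theta\, x_1-\sin\theta\, x_2,\ \sin\theta\, x_1+\cos\theta\, x_2,\ x_3)$, and the group law is composition of these maps. The number $\theta$ (mod $2\pi$) is the angle of the fiber rotation of $(a,e^{i\theta})$; elements with $\theta=0$ are identified with $\mathrm{Nil}_3$ (left translations). Normal Gauss map: let $e_1,e_2,e_3$ be the standard basis of the Lie algebra $\mathfrak{nil}_3\cong\mathbb R^3$ (with $[e_1,e_2]=e_3$). For a conformal immersion $f$ and local conformal coordinate $z$, write $f^{-1}\partial_z f=\phi_1e_1+\phi_2e_2+\phi_3e_3$ (left translation to the identity). There are functions $\psi_1,\psi_2$ (unique up to a common sign) with $\phi_1=\overline{\psi_2}^2-\psi_1^2$, $\phi_2=i(\overline{\psi_2}^2+\psi_1^2)$, $\phi_3=2\psi_1\overline{\psi_2}$. The left-translated unit normal is $f^{-1}N=\big(2\,\mathrm{Re}(\psi_1\psi_2)e_1+2\,\mathrm{Im}(\psi_1\psi_2)e_2+(|\psi_1|^2-|\psi_2|^2)e_3\big)/(|\psi_1|^2+|\psi_2|^2)$,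 and the normal Gauss map is $g=\psi_2/\overline{\psi_1}$ (stereographic projection of $f^{-1}N$ from the south pole). $f$ is nowhere vertical if $|\psi_1|\ne|\psi_2|$ everywhere (the vector field $\partial_{x_3}$ is nowhere tangent), and has upward normal if $|\psi_1|>|\psi_2|$, so that $g$ takes values in the unit disk, viewed as the Poincaré model of $\mathbb H^2=\mathrm{SU}_{1,1}/\mathrm U_1$. *)

theory Defs
  imports "HOL-Analysis.Analysis"
begin

definition riemann_surface :: "'a topology \<Rightarrow> ('a set \<times> ('a \<Rightarrow> complex)) set \<Rightarrow> bool" where
  "riemann_surface X A \<longleftrightarrow>
     Hausdorff_space X \<and> connected_space X \<and> topspace X \<noteq> {} \<and>
     (\<Union>(fst ` A) = topspace X) \<and>
     (\<forall>(U,\<phi>)\<in>A. openin X U \<and> open (\<phi> ` U) \<and>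
        homeomorphic_map (subtopology X U) (top_of_set (\<phi> ` U)) \<phi>) \<and>
     (\<forall>(U,\<phi>)\<in>A. \<forall>(V,\<psi>)\<in>A. (\<psi> \<circ> inv_into U \<phi>) holomorphic_on (\<phi> ` (U \<inter> V)))"

definition riemann_holomorphic :: "'a topology \<Rightarrow> ('a set \<times> ('a \<Rightarrow> complex)) set \<Rightarrow> ('a \<Rightarrow> 'a) \<Rightarrow> bool" where
  "riemann_holomorphic X A h \<longleftrightarrow>
     continuous_map X X h \<and>
     (\<forall>(U,\<phi>)\<in>A. \<forall>(V,\<psi>)\<in>A.
        (\<psi> \<circ> h \<circ> inv_into U \<phi>) holomorphic_on (\<phi> ` (U \<inter> {p \<in> topspace X. h p \<in> V})))"

definition riemann_aut :: "'a topology \<Rightarrow> ('a set \<times> ('a \<Rightarrow> complex)) set \<Rightarrow> ('a \<Rightarrow> 'a) \<Rightarrow> bool" where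
  "riemann_aut X A h \<longleftrightarrow>
     homeomorphic_map X X h \<and> riemann_holomorphic X A h \<and>
     riemann_holomorphic X A (inv_into (topspace X) h)"

definition nil_mult :: "real^3 \<Rightarrow> real^3 \<Rightarrow> real^3" where
  "nil_mult a x = vector [a$1 + x$1, a$2 + x$2, a$3 + x$3 + (a$1 * x$2 - a$2 * x$1) / 2]"

definition nil_inv :: "real^3 \<Rightarrow> real^3" where
  "nil_inv a = - a"

definition nil_rot :: "real \<Rightarrow> real^3 \<Rightarrow> real^3" where
  "nil_rot \<theta> x = vector [cos \<theta> * x$1 - sin \<theta> * x$2, sin \<theta> * x$1 + cos \<theta> * x$2, x$3]"

definition nil_iso :: "real^3 \<Rightarrow> real \<Rightarrow> real^3 \<Rightarrow> real^3" where
  "nil_iso p \<theta> x = nil_mult p (nil_rot \<theta> x)"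

definition nil_inner :: "real^3 \<Rightarrow> real^3 \<Rightarrow> real^3 \<Rightarrow> real" where
  "nil_inner x v w =
     v$1 * w$1 + v$2 * w$2 +
     (v$3 + (x$2 * v$1 - x$1 * v$2) / 2) * (w$3 + (x$2 * w$1 - x$1 * w$2) / 2)"

definition nil_metric_matrix :: "real^3 \<Rightarrow> real^3^3" where
  "nil_metric_matrix x = (\<chi> i j. nil_inner x (axis i 1) (axis j 1))"

definition pd3 :: "(real^3 \<Rightarrow> real) \<Rightarrow> 3 \<Rightarrow> real^3 \<Rightarrow> real" where
  "pd3 h i x = frechet_derivative h (at x) (axis i 1)"

definition nil_christoffel :: "3 \<Rightarrow> 3 \<Rightarrow> 3 \<Rightarrow> real^3 \<Rightarrow> real" where
  "nil_christoffel k i j x =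
     (\<Sum>l\<in>UNIV. (matrix_inv (nil_metric_matrix x)) $ k $ l *
        (pd3 (\<lambda>y. nil_metric_matrix y $ j $ l) i x + pd3 (\<lambda>y. nil_metric_matrix y $ i $ l) j x
         - pd3 (\<lambda>y. nil_metric_matrix y $ i $ j) l x)) / 2"

definition dx :: "(complex \<Rightarrow> 'b::real_normed_vector) \<Rightarrow> complex \<Rightarrow> 'b" where
  "dx F z = frechet_derivative F (at z) 1"

definition dy :: "(complex \<Rightarrow> 'b::real_normed_vector) \<Rightarrow> complex \<Rightarrow> 'b" where
  "dy F z = frechet_derivative F (at z) \<i>"

fun Ck_on :: "nat \<Rightarrow> complex set \<Rightarrow> (complex \<Rightarrow> real^3) \<Rightarrow> bool" where
  "Ck_on 0 S F = continuous_on S F"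
| "Ck_on (Suc k) S F =
     ((\<forall>z\<in>S. F differentiable (at z)) \<and> Ck_on k S (dx F) \<and> Ck_on k S (dy F))"

definition smooth_on3 :: "complex set \<Rightarrow> (complex \<Rightarrow> real^3) \<Rightarrow> bool" where
  "smooth_on3 S F \<longleftrightarrow> (\<forall>k. Ck_on k S F)"

definition conformal_immersion_at :: "(complex \<Rightarrow> real^3) \<Rightarrow> complex \<Rightarrow> bool" where
  "conformal_immersion_at F z \<longleftrightarrow>
     inj (frechet_derivative F (at z)) \<and>
     nil_inner (F z) (dx F z) (dx F z) = nil_inner (F z) (dy F z) (dy F z) \<and>
     nil_inner (F z) (dx F z) (dy F z) = 0"

text \<open>Tension field (in the coordinates x1,x2,x3), and mean curvature vector
  H = tension / (2 lambda^2) of a conformal immersion with conformal factor lambda^2.\<close>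

definition nil_tension :: "(complex \<Rightarrow> real^3) \<Rightarrow> complex \<Rightarrow> real^3" where
  "nil_tension F z = (\<chi> k. dx (dx F) z $ k + dy (dy F) z $ k +
      (\<Sum>i\<in>UNIV. \<Sum>j\<in>UNIV. nil_christoffel k i j (F z) *
         (dx F z $ i * dx F z $ j + dy F z $ i * dy F z $ j)))"

definition nil_mean_curvature_vector :: "(complex \<Rightarrow> real^3) \<Rightarrow> complex \<Rightarrow> real^3" where
  "nil_mean_curvature_vector F z =
     (1 / (2 * nil_inner (F z) (dx F z) (dx F z))) *\<^sub>R nil_tension F z"

text \<open>phi_k: components of f^{-1} d_z f (left translation to the identity), d_z = (d_x - i d_y)/2.\<close>

definition nil_phi :: "(complex \<Rightarrow> real^3) \<Rightarrow> complex \<Rightarrow> 3 \<Rightarrow> complex" where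
  "nil_phi F z k =
     (let L = (\<lambda>w. nil_mult (nil_inv (F z)) (F w))
      in (complex_of_real (dx L z $ k) - \<i> * complex_of_real (dy L z $ k)) / 2)"

definition spinor_data :: "(complex \<Rightarrow> real^3) \<Rightarrow> complex \<Rightarrow> complex \<Rightarrow> complex \<Rightarrow> bool" where
  "spinor_data F z \<psi>1 \<psi>2 \<longleftrightarrow>
     nil_phi F z 1 = (cnj \<psi>2)\<^sup>2 - \<psi>1\<^sup>2 \<and>
     nil_phi F z 2 = \<i> * ((cnj \<psi>2)\<^sup>2 + \<psi>1\<^sup>2) \<and>
     nil_phi F z 3 = 2 * \<psi>1 * cnj \<psi>2"

definition local_rep :: "('a \<Rightarrow> 'b) \<Rightarrow> 'a set \<Rightarrow> ('a \<Rightarrow> complex) \<Rightarrow> complex \<Rightarrow> 'b" where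
  "local_rep f U \<phi> = f \<circ> inv_into U \<phi>"

definition conformal_minimal_immersion ::
    "'a topology \<Rightarrow> ('a set \<times> ('a \<Rightarrow> complex)) set \<Rightarrow> ('a \<Rightarrow> real^3) \<Rightarrow> bool" where
  "conformal_minimal_immersion X A f \<longleftrightarrow>
     (\<forall>(U,\<phi>)\<in>A. smooth_on3 (\<phi> ` U) (local_rep f U \<phi>) \<and>
        (\<forall>z\<in>\<phi> ` U. conformal_immersion_at (local_rep f U \<phi>) z \<and>
                     nil_mean_curvature_vector (local_rep f U \<phi>) z = 0))"

definition nowhere_vertical_upward ::
    "'a topology \<Rightarrow> ('a set \<times> ('a \<Rightarrow> complex)) set \<Rightarrow> ('a \<Rightarrow> real^3) \<Rightarrow> bool" where
  "nowhere_vertical_upward X A f \<longleftrightarrow>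
     (\<forall>(U,\<phi>)\<in>A. \<forall>z\<in>\<phi> ` U. \<forall>\<psi>1 \<psi>2.
        spinor_data (local_rep f U \<phi>) z \<psi>1 \<psi>2 \<longrightarrow> cmod \<psi>2 < cmod \<psi>1)"

definition normal_gauss_map ::
    "'a topology \<Rightarrow> ('a set \<times> ('a \<Rightarrow> complex)) set \<Rightarrow> ('a \<Rightarrow> real^3) \<Rightarrow> ('a \<Rightarrow> complex) \<Rightarrow> bool" where
  "normal_gauss_map X A f g \<longleftrightarrow>
     (\<forall>(U,\<phi>)\<in>A. \<forall>p\<in>U. \<exists>\<psi>1 \<psi>2.
        spinor_data (local_rep f U \<phi>) (\<phi> p) \<psi>1 \<psi>2 \<and> g p = \<psi>2 / cnj \<psi>1)"

end

theory Submission
  imports Defs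
begin

(*
  In a local conformal coordinate the left-translated derivative \<phi> = f\<^sup>-\<^sup>1 \<partial>\<^sub>z f is
  determined by \<mu> = \<psi>\<^sub>1\<^sup>2 and the normal Gauss map g, namely
  \<phi> = \<mu> (cnj g\<^sup>2 - 1, i (cnj g\<^sup>2 + 1), 2 cnj g).
  An isometry (p, e\<^sup>i\<^sup>\<theta>) rotates the horizontal part of \<phi>, which replaces (\<mu>, g) by
  (e\<^sup>i\<^sup>\<theta> \<mu>, e\<^sup>i\<^sup>\<theta> g), while precomposing with the automorphism \<gamma> only multiplies \<phi>
  by the derivative of \<gamma> in charts; comparing Gauss maps gives (a).

  For (b), minimality (vanishing tension) together with the symmetry of second derivatives
  yields \<mu> (1 - |g|\<^sup>2)\<^sup>2 = 2 i \<partial>\<^sub>z g, so \<mu> is recovered from g. If g \<circ> \<gamma> = e\<^sup>i\<^sup>\<theta> g,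
  this forces f \<circ> \<gamma> and the rotated surface to have the same \<phi>. Two immersions with the same
  \<phi> differ by a left translation on every disc, and as the surface is connected the
  translation is the same everywhere.
*)

section \<open>The Heisenberg group and its Levi-Civita connection\<close>

definition nil_dL :: "real^3 \<Rightarrow> real^3 \<Rightarrow> real^3" where
  "nil_dL b v = vector [v$1, v$2, v$3 + (b$1 * v$2 - b$2 * v$1) / 2]"

lemma nil_dL_nth [simp]:
  "nil_dL b v $ 1 = v$1" "nil_dL b v $ 2 = v$2"
  "nil_dL b v $ 3 = v$3 + (b$1 * v$2 - b$2 * v$1) / 2"
  by (simp_all add: nil_dL_def)

lemma nil_mult_eq_add_dL: "nil_mult b x = b + nil_dL b x"
  by (simp add: nil_mult_def vec_eq_iff forall_3 field_simps)

lemma bounded_linear_nil_dL: "bounded_linear (nil_dL b)"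
  by (simp add: linear_conv_bounded_linear[symmetric] linear_iff vec_eq_iff forall_3 field_simps)

lemma nil_mult_zero_left [simp]: "nil_mult 0 y = y"
  by (simp add: nil_mult_def vec_eq_iff forall_3)

lemma nil_mult_nth [simp]:
  "nil_mult a x $ 1 = a$1 + x$1" "nil_mult a x $ 2 = a$2 + x$2"
  "nil_mult a x $ 3 = a$3 + x$3 + (a$1 * x$2 - a$2 * x$1) / 2"
  by (simp_all add: nil_mult_def)

lemma nil_mult_right_inverse: "nil_mult (nil_mult x (- y)) y = x"
  by (simp add: nil_mult_def vec_eq_iff forall_3 field_simps)

lemma nil_mult_cancel_right: "nil_mult (nil_mult a y) (- y) = a"
  by (simp add: nil_mult_def vec_eq_iff forall_3 field_simps)

lemma nil_rot_nth [simp]: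
  "nil_rot \<theta> x $ 1 = cos \<theta> * x$1 - sin \<theta> * x$2"
  "nil_rot \<theta> x $ 2 = sin \<theta> * x$1 + cos \<theta> * x$2"
  "nil_rot \<theta> x $ 3 = x$3"
  by (simp_all add: nil_rot_def)

lemma bounded_linear_nil_rot: "bounded_linear (nil_rot \<theta>)"
  by (simp add: linear_conv_bounded_linear[symmetric] linear_iff vec_eq_iff forall_3 algebra_simps)

lemma nil_iso_zero: "nil_iso 0 \<theta> = nil_rot \<theta>"
  by (simp add: nil_iso_def fun_eq_iff)

definition nil_metric_inv :: "real^3 \<Rightarrow> real^3^3" where
  "nil_metric_inv x = (\<chi> i j.
     if i = 1 \<and> j = 1 \<or> i = 2 \<and> j = 2 then 1
     else if i = 1 \<and> j = 3 \<or> i = 3 \<and> j = 1 then - x$2 / 2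
     else if i = 2 \<and> j = 3 \<or> i = 3 \<and> j = 2 then x$1 / 2
     else if i = 3 \<and> j = 3 then 1 + (x$1^2 + x$2^2) / 4 else 0)"

lemma matrix_inv_nil_metric: "matrix_inv (nil_metric_matrix x) = nil_metric_inv x"
proof -
  have right: "nil_metric_matrix x ** nil_metric_inv x = mat 1"
    unfolding nil_metric_matrix_def nil_metric_inv_def matrix_matrix_mult_def mat_def
    by (simp add: vec_eq_iff forall_3 sum_3 nil_inner_def axis_def field_simps power2_eq_square)
  then have "\<exists>B. nil_metric_matrix x ** B = mat 1 \<and> B ** nil_metric_matrix x = mat 1"
    using matrix_left_right_inverse by blast
  then have "matrix_inv (nil_metric_matrix x) ** nil_metric_matrix x = mat 1"
    unfolding matrix_inv_def by (rule someI2_ex) blast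
  then have "matrix_inv (nil_metric_matrix x) ** (nil_metric_matrix x ** nil_metric_inv x) = nil_metric_inv x"
    by (simp add: matrix_mul_assoc)
  with right show ?thesis by simp
qed

lemma pd3_nil_inner:
  "pd3 (\<lambda>y. nil_inner y v w) i x =
     (axis i 1$2 * v$1 - axis i 1$1 * v$2) / 2 * (w$3 + (x$2 * w$1 - x$1 * w$2) / 2)
   + (v$3 + (x$2 * v$1 - x$1 * v$2) / 2) * ((axis i 1$2 * w$1 - axis i 1$1 * w$2) / 2)"
proof -
  have "((\<lambda>y. nil_inner y v w) has_derivative (\<lambda>d.
          (d$2 * v$1 - d$1 * v$2) / 2 * (w$3 + (x$2 * w$1 - x$1 * w$2) / 2)
        + (v$3 + (x$2 * v$1 - x$1 * v$2) / 2) * ((d$2 * w$1 - d$1 * w$2) / 2))) (at x)"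
    unfolding nil_inner_def
    by (auto intro!: derivative_eq_intros bounded_linear.has_derivative[OF bounded_linear_vec_nth]
             simp: fun_eq_iff field_simps)
  then show ?thesis
    unfolding pd3_def by (simp add: frechet_derivative_at[symmetric])
qed

lemma nil_christoffel_eq:
  "nil_christoffel k i j x = (\<Sum>l\<in>UNIV. nil_metric_inv x $ k $ l *
     (pd3 (\<lambda>y. nil_inner y (axis j 1) (axis l 1)) i x + pd3 (\<lambda>y. nil_inner y (axis i 1) (axis l 1)) j x
      - pd3 (\<lambda>y. nil_inner y (axis i 1) (axis j 1)) l x)) / 2"
  by (simp only: nil_christoffel_def matrix_inv_nil_metric) (simp add: nil_metric_matrix_def)

lemma nil_christoffel_sym: "nil_christoffel k i j x = nil_christoffel k j i x"
  by (simp add: nil_christoffel_eq add.commute nil_inner_def mult.commute)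

definition dz_vec :: "(complex \<Rightarrow> real^3) \<Rightarrow> complex \<Rightarrow> complex^3" where
  "dz_vec F w = (\<chi> k. (of_real (dx F w $ k) - \<i> * of_real (dy F w $ k)) / 2)"

definition nil_gamma :: "real^3 \<Rightarrow> complex^3 \<Rightarrow> complex^3 \<Rightarrow> complex^3" where
  "nil_gamma x a b = (\<chi> k. \<Sum>i\<in>UNIV. \<Sum>j\<in>UNIV. of_real (nil_christoffel k i j x) * a$i * b$j)"

lemma nil_gamma_nth:
  "nil_gamma x a b $ 1 =
     of_real (x$2) / 4 * (a$1 * b$2 + a$2 * b$1) - of_real (x$1) / 2 * a$2 * b$2
     + (a$2 * b$3 + a$3 * b$2) / 2"
  "nil_gamma x a b $ 2 =
     - of_real (x$2) / 2 * a$1 * b$1 + of_real (x$1) / 4 * (a$1 * b$2 + a$2 * b$1)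
     - (a$1 * b$3 + a$3 * b$1) / 2"
  "nil_gamma x a b $ 3 =
     - of_real (x$1 * x$2) / 4 * a$1 * b$1 + of_real (x$1^2 - x$2^2) / 8 * (a$1 * b$2 + a$2 * b$1)
     + of_real (x$1 * x$2) / 4 * a$2 * b$2
     - of_real (x$1) / 4 * (a$1 * b$3 + a$3 * b$1) - of_real (x$2) / 4 * (a$2 * b$3 + a$3 * b$2)"
  by (simp_all add: nil_gamma_def nil_christoffel_eq pd3_nil_inner sum_3 nil_metric_inv_def axis_def
                    field_simps power2_eq_square)

lemma sum_symmetric_hermitian_form:
  fixes c :: "'i \<Rightarrow> 'i \<Rightarrow> real" and A B :: "'i \<Rightarrow> real"
  assumes sym: "\<And>i j. c i j = c j i"
  defines "a \<equiv> \<lambda>i. (of_real (A i) - \<i> * of_real (B i)) / 2"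
  shows "(\<Sum>i\<in>I. \<Sum>j\<in>I. of_real (c i j) * a i * cnj (a j))
       = of_real (\<Sum>i\<in>I. \<Sum>j\<in>I. c i j * (A i * A j + B i * B j)) / 4"
proof -
  have summand: "of_real (c i j) * a i * cnj (a j)
      = of_real (c i j * (A i * A j + B i * B j)) / 4 + \<i> * of_real (c i j * (A i * B j - B i * A j)) / 4"
    for i j by (simp add: a_def complex_eq_iff field_simps)
  have "(\<Sum>i\<in>I. \<Sum>j\<in>I. c i j * (B i * A j)) = (\<Sum>j\<in>I. \<Sum>i\<in>I. c j i * (B i * A j))"
    by (subst sum.swap) (simp add: sym)
  then have "(\<Sum>i\<in>I. \<Sum>j\<in>I. c i j * (A i * B j - B i * A j)) = 0"
    by (simp add: sum_subtractf right_diff_distrib mult.commute)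
  then have "(\<Sum>i\<in>I. \<Sum>j\<in>I. \<i> * of_real (c i j * (A i * B j - B i * A j)) / 4 :: complex) = 0"
    unfolding sum_divide_distrib[symmetric] sum_distrib_left[symmetric] of_real_sum[symmetric] by simp
  then show ?thesis
    by (simp add: summand sum.distrib sum_divide_distrib)
qed

lemma nil_tension_eq:
  "of_real (nil_tension F z $ k) =
     of_real (dx (dx F) z $ k + dy (dy F) z $ k)
     + 4 * nil_gamma (F z) (dz_vec F z) (\<chi> i. cnj (dz_vec F z $ i)) $ k"
proof -
  define S where "S = (\<Sum>i\<in>UNIV. \<Sum>j\<in>UNIV.
    nil_christoffel k i j (F z) * (dx F z $ i * dx F z $ j + dy F z $ i * dy F z $ j))"
  let ?a = "\<lambda>i. (of_real (dx F z $ i) - \<i> * of_real (dy F z $ i)) / 2"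
  have "nil_gamma (F z) (dz_vec F z) (\<chi> i. cnj (dz_vec F z $ i)) $ k
      = (\<Sum>i\<in>UNIV. \<Sum>j\<in>UNIV. of_real (nil_christoffel k i j (F z)) * ?a i * cnj (?a j))"
    by (simp add: nil_gamma_def dz_vec_def)
  also have "\<dots> = of_real S / 4"
    unfolding S_def by (rule sum_symmetric_hermitian_form[OF nil_christoffel_sym])
  finally show ?thesis
    by (simp add: nil_tension_def S_def mult.commute[of _ 4])
qed

section \<open>Symmetry of second derivatives\<close>

lemma has_real_derivative_along_line:
  fixes f :: "'a::real_normed_vector \<Rightarrow> real"
  assumes "(f has_derivative Df) (at (z + s *\<^sub>R u))"
  shows "((\<lambda>t. f (z + t *\<^sub>R u)) has_real_derivative Df u) (at s)"
proof -
  have "((\<lambda>t. z + t *\<^sub>R u) has_derivative (\<lambda>t. t *\<^sub>R u)) (at s)"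
    by (auto intro!: derivative_eq_intros)
  from has_derivative_compose[OF this assms]
  have "((\<lambda>t. f (z + t *\<^sub>R u)) has_derivative (\<lambda>t. t * Df u)) (at s)"
    using linear_scale[OF has_derivative_linear[OF assms]] by (simp add: o_def)
  moreover have "(\<lambda>t. t * Df u) = (*) (Df u)"
    by (auto simp: fun_eq_iff)
  ultimately show ?thesis
    by (simp add: has_field_derivative_def)
qed

lemma second_difference_mvt:
  fixes f :: "'a::real_normed_vector \<Rightarrow> real"
  assumes "h > 0"
    and near: "\<And>t. 0 \<le> t \<Longrightarrow> t \<le> h \<Longrightarrow> (f has_derivative Df (z + t *\<^sub>R u)) (at (z + t *\<^sub>R u))"
    and far: "\<And>t. 0 \<le> t \<Longrightarrow> t \<le> h \<Longrightarrow>
      (f has_derivative Df (z + h *\<^sub>R v + t *\<^sub>R u)) (at (z + h *\<^sub>R v + t *\<^sub>R u))"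
  obtains \<xi> where "0 < \<xi>" "\<xi> < h"
    "f (z + h *\<^sub>R v + h *\<^sub>R u) - f (z + h *\<^sub>R v) - f (z + h *\<^sub>R u) + f z
       = h * (Df (z + h *\<^sub>R v + \<xi> *\<^sub>R u) u - Df (z + \<xi> *\<^sub>R u) u)"
proof -
  let ?g = "\<lambda>t. f (z + h *\<^sub>R v + t *\<^sub>R u) - f (z + t *\<^sub>R u)"
  have "\<exists>\<xi>. 0 < \<xi> \<and> \<xi> < h \<and> ?g h - ?g 0 = (h - 0) *
          (Df (z + h *\<^sub>R v + \<xi> *\<^sub>R u) u - Df (z + \<xi> *\<^sub>R u) u)"
  proof (rule MVT2)
    fix t assume "0 \<le> t" "t \<le> h"
    then show "(?g has_real_derivative Df (z + h *\<^sub>R v + t *\<^sub>R u) u - Df (z + t *\<^sub>R u) u) (at t)"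
      by (intro derivative_intros has_real_derivative_along_line far near)
  qed (rule \<open>h > 0\<close>)
  then show ?thesis
    using that by (auto simp: algebra_simps)
qed

lemma norm_scaleR_add_le:
  fixes u v :: "'a::real_normed_vector"
  assumes "0 \<le> s" "s \<le> h" "0 \<le> t" "t \<le> h"
  shows "norm (s *\<^sub>R v + t *\<^sub>R u) \<le> h * (norm u + norm v)"
proof -
  have "norm (s *\<^sub>R v + t *\<^sub>R u) \<le> s * norm v + t * norm u"
    using assms norm_triangle_ineq[of "s *\<^sub>R v" "t *\<^sub>R u"] by simp
  also have "\<dots> \<le> h * (norm u + norm v)"
    using assms mult_right_mono[of s h "norm v"] mult_right_mono[of t h "norm u"] by (simp add: distrib_left)
  finally show ?thesis .
qed

lemma second_difference_bound:
  fixes f :: "'a::real_normed_vector \<Rightarrow> real"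
  assumes h: "h > 0" and n: "norm u + norm v \<le> n"
    and Df: "\<And>w. norm (w - z) \<le> h * n \<Longrightarrow> (f has_derivative Df w) (at w)"
    and D: "linear D"
    and approx: "\<And>w. norm (w - z) \<le> h * n \<Longrightarrow> \<bar>Df w u - Df z u - D (w - z)\<bar> \<le> c * norm (w - z)"
    and "c \<ge> 0"
  shows "\<bar>f (z + h *\<^sub>R v + h *\<^sub>R u) - f (z + h *\<^sub>R v) - f (z + h *\<^sub>R u) + f z - h\<^sup>2 * D v\<bar> \<le> 2 * c * n * h\<^sup>2"
proof -
  have near: "norm ((z + s *\<^sub>R v + t *\<^sub>R u) - z) \<le> h * n" if "0 \<le> s" "s \<le> h" "0 \<le> t" "t \<le> h" for s t
    using order_trans[OF norm_scaleR_add_le[OF that] mult_left_mono[OF n]] h by (simp add: add.assoc)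
  obtain \<xi> where \<xi>: "0 < \<xi>" "\<xi> < h"
    "f (z + h *\<^sub>R v + h *\<^sub>R u) - f (z + h *\<^sub>R v) - f (z + h *\<^sub>R u) + f z
       = h * (Df (z + h *\<^sub>R v + \<xi> *\<^sub>R u) u - Df (z + \<xi> *\<^sub>R u) u)"
  proof (rule second_difference_mvt[OF h])
    fix t assume "0 \<le> t" "t \<le> h"
    then show "(f has_derivative Df (z + t *\<^sub>R u)) (at (z + t *\<^sub>R u))"
      and "(f has_derivative Df (z + h *\<^sub>R v + t *\<^sub>R u)) (at (z + h *\<^sub>R v + t *\<^sub>R u))"
      using Df near[of 0 t] near[of h t] h by simp_all
  qed
  have est: "\<bar>Df (z + s *\<^sub>R v + \<xi> *\<^sub>R u) u - Df z u - D (s *\<^sub>R v + \<xi> *\<^sub>R u)\<bar> \<le> c * (h * n)"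
    if "0 \<le> s" "s \<le> h" for s
    using approx[OF near[of s \<xi>]] near[of s \<xi>] mult_left_mono[OF near[of s \<xi>] \<open>c \<ge> 0\<close>] that \<xi>
    by (simp add: add.assoc)
  have "D (h *\<^sub>R v + \<xi> *\<^sub>R u) - D (\<xi> *\<^sub>R u) = h * D v"
    using linear_add[OF D] linear_scale[OF D] by simp
  moreover have "\<bar>Df (z + \<xi> *\<^sub>R u) u - Df z u - D (\<xi> *\<^sub>R u)\<bar> \<le> c * (h * n)"
    "\<bar>Df (z + h *\<^sub>R v + \<xi> *\<^sub>R u) u - Df z u - D (h *\<^sub>R v + \<xi> *\<^sub>R u)\<bar> \<le> c * (h * n)"
    using est[of 0] est[of h] h by simp_all
  ultimately have "\<bar>Df (z + h *\<^sub>R v + \<xi> *\<^sub>R u) u - Df (z + \<xi> *\<^sub>R u) u - h * D v\<bar> \<le> 2 * (c * (h * n))"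
    by arith
  moreover have "f (z + h *\<^sub>R v + h *\<^sub>R u) - f (z + h *\<^sub>R v) - f (z + h *\<^sub>R u) + f z - h\<^sup>2 * D v
      = h * (Df (z + h *\<^sub>R v + \<xi> *\<^sub>R u) u - Df (z + \<xi> *\<^sub>R u) u - h * D v)"
    unfolding \<xi>(3) by (simp add: power2_eq_square algebra_simps)
  ultimately have "\<bar>f (z + h *\<^sub>R v + h *\<^sub>R u) - f (z + h *\<^sub>R v) - f (z + h *\<^sub>R u) + f z - h\<^sup>2 * D v\<bar>
      \<le> h * (2 * (c * (h * n)))"
    using h by (simp add: abs_mult mult_left_mono)
  then show ?thesis
    by (simp add: power2_eq_square mult_ac)
qed

lemma second_difference_estimate:
  fixes f :: "'a::real_normed_vector \<Rightarrow> real"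
  assumes S: "open S" "z \<in> S"
    and Df: "\<And>w. w \<in> S \<Longrightarrow> (f has_derivative Df w) (at w)"
    and D: "((\<lambda>w. Df w u) has_derivative D) (at z)"
    and "e > 0"
  obtains d where "d > 0" "\<And>h. 0 < h \<Longrightarrow> h < d \<Longrightarrow>
    \<bar>f (z + h *\<^sub>R v + h *\<^sub>R u) - f (z + h *\<^sub>R v) - f (z + h *\<^sub>R u) + f z - h\<^sup>2 * D v\<bar> \<le> e * h\<^sup>2"
proof -
  define n where "n = norm u + norm v + 1"
  have n: "n > 0" "norm u + norm v \<le> n"
    unfolding n_def using norm_ge_zero[of u] norm_ge_zero[of v] by linarith+
  obtain d1 where d1: "d1 > 0" "\<And>y. norm (y - z) < d1 \<Longrightarrow>
      \<bar>Df y u - Df z u - D (y - z)\<bar> \<le> e / (2 * n) * norm (y - z)"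
    using D \<open>e > 0\<close> n unfolding has_derivative_at_alt by (metis divide_pos_pos real_norm_def zero_less_mult_iff zero_less_numeral)
  obtain d2 where d2: "d2 > 0" "ball z d2 \<subseteq> S"
    using S open_contains_ball by blast
  show ?thesis
  proof (rule that[of "min d1 d2 / n"])
    show "min d1 d2 / n > 0" using d1 d2 n by simp
    fix h assume h: "0 < h" "h < min d1 d2 / n"
    then have small: "norm (w - z) < d1" "w \<in> S" if "norm (w - z) \<le> h * n" for w
      using that n d2(2) by (auto simp: field_simps dist_norm norm_minus_commute)
    have "\<bar>f (z + h *\<^sub>R v + h *\<^sub>R u) - f (z + h *\<^sub>R v) - f (z + h *\<^sub>R u) + f z - h\<^sup>2 * D v\<bar>
        \<le> 2 * (e / (2 * n)) * n * h\<^sup>2"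
      using \<open>e > 0\<close> n by (intro second_difference_bound[OF h(1) n(2) Df[OF small(2)]
          has_derivative_linear[OF D] d1(2)[OF small(1)]]) simp_all
    then show "\<bar>f (z + h *\<^sub>R v + h *\<^sub>R u) - f (z + h *\<^sub>R v) - f (z + h *\<^sub>R u) + f z - h\<^sup>2 * D v\<bar> \<le> e * h\<^sup>2"
      using n by simp
  qed
qed

lemma derivative_of_derivative_symmetric:
  fixes f :: "'a::real_normed_vector \<Rightarrow> real"
  assumes S: "open S" "z \<in> S"
    and Df: "\<And>w. w \<in> S \<Longrightarrow> (f has_derivative Df w) (at w)"
    and Du: "((\<lambda>w. Df w u) has_derivative Du) (at z)"
    and Dv: "((\<lambda>w. Df w v) has_derivative Dv) (at z)"
  shows "Du v = Dv u"
proof (rule ccontr)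
  assume ne: "Du v \<noteq> Dv u"
  define e where "e = \<bar>Du v - Dv u\<bar> / 3"
  have e: "e > 0" using ne by (simp add: e_def)
  obtain d1 where d1: "d1 > 0" "\<And>h. 0 < h \<Longrightarrow> h < d1 \<Longrightarrow>
      \<bar>f (z + h *\<^sub>R v + h *\<^sub>R u) - f (z + h *\<^sub>R v) - f (z + h *\<^sub>R u) + f z - h\<^sup>2 * Du v\<bar> \<le> e * h\<^sup>2"
    using second_difference_estimate[OF S Df Du e] by blast
  obtain d2 where d2: "d2 > 0" "\<And>h. 0 < h \<Longrightarrow> h < d2 \<Longrightarrow>
      \<bar>f (z + h *\<^sub>R u + h *\<^sub>R v) - f (z + h *\<^sub>R u) - f (z + h *\<^sub>R v) + f z - h\<^sup>2 * Dv u\<bar> \<le> e * h\<^sup>2"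
    using second_difference_estimate[OF S Df Dv e] by blast
  define h where "h = min d1 d2 / 2"
  have h: "0 < h" "h < d1" "h < d2" using d1 d2 by (auto simp: h_def)
  define \<Delta> where "\<Delta> = f (z + h *\<^sub>R v + h *\<^sub>R u) - f (z + h *\<^sub>R v) - f (z + h *\<^sub>R u) + f z"
  have "\<Delta> = f (z + h *\<^sub>R u + h *\<^sub>R v) - f (z + h *\<^sub>R u) - f (z + h *\<^sub>R v) + f z"
    by (simp add: \<Delta>_def add_ac)
  then have "\<bar>h\<^sup>2 * Du v - h\<^sup>2 * Dv u\<bar> \<le> 2 * e * h\<^sup>2"
    using d1(2)[OF h(1,2)] d2(2)[OF h(1,3)] unfolding \<Delta>_def[symmetric] by arith
  then have "h\<^sup>2 * \<bar>Du v - Dv u\<bar> \<le> 2 * e * h\<^sup>2"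
    by (metis abs_mult abs_power2 right_diff_distrib)
  then show False
    using h ne by (simp add: e_def)
qed

lemma dy_dx_eq_dx_dy:
  fixes F :: "complex \<Rightarrow> real^3"
  assumes "open S" "z \<in> S" "\<And>w. w \<in> S \<Longrightarrow> F differentiable (at w)"
    and "dx F differentiable (at z)" "dy F differentiable (at z)"
  shows "dy (dx F) z = dx (dy F) z"
proof -
  have nth: "((\<lambda>w. G w $ k) has_derivative (\<lambda>h. frechet_derivative G (at w) h $ k)) (at w)"
    if "G differentiable (at w)" for G :: "complex \<Rightarrow> real^3" and w k
    using bounded_linear.has_derivative[OF bounded_linear_vec_nth frechet_derivative_works[THEN iffD1, OF that]] .
  have "frechet_derivative (dx F) (at z) \<i> $ k = frechet_derivative (dy F) (at z) 1 $ k" for k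
    using assms(1,2) nth[OF assms(3)] nth[OF assms(4)] nth[OF assms(5)]
    unfolding dx_def dy_def by (rule derivative_of_derivative_symmetric)
  then show ?thesis
    by (simp add: dx_def dy_def vec_eq_iff)
qed

section \<open>Wirtinger derivatives and the left-translated derivative\<close>

lemma frechet_derivative_cong_open:
  assumes "open S" "z \<in> S" "\<And>w. w \<in> S \<Longrightarrow> G w = H w"
  shows "frechet_derivative G (at z) = frechet_derivative H (at z)"
proof -
  have "(G has_derivative L) (at z) \<longleftrightarrow> (H has_derivative L) (at z)" for L
  proof
    show "(H has_derivative L) (at z)" if "(G has_derivative L) (at z)"
      using has_derivative_transform_within_open[OF that assms(1,2)] assms(3) by blast
    show "(G has_derivative L) (at z)" if "(H has_derivative L) (at z)"
      using has_derivative_transform_within_open[OF that assms(1,2)] assms(3) by force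
  qed
  then show ?thesis
    unfolding frechet_derivative_def by simp
qed

lemma differentiable_cong_open:
  assumes "G differentiable (at z)" "open S" "z \<in> S" "\<And>w. w \<in> S \<Longrightarrow> G w = H w"
  shows "H differentiable (at z)"
  using assms has_derivative_transform_within_open[of G _ z UNIV S H] unfolding differentiable_def by blast

lemma linear_complex_decomp:
  assumes "linear L"
  shows "L v = Re v *\<^sub>R L 1 + Im v *\<^sub>R L \<i>"
proof -
  have "Re v *\<^sub>R 1 + Im v *\<^sub>R \<i> = v"
    by (simp add: complex_eq_iff)
  moreover have "L (Re v *\<^sub>R 1 + Im v *\<^sub>R \<i>) = Re v *\<^sub>R L 1 + Im v *\<^sub>R L \<i>"
    by (simp add: linear_add[OF assms] linear_scale[OF assms])
  ultimately show ?thesis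
    by simp
qed

definition dz :: "(complex \<Rightarrow> complex) \<Rightarrow> complex \<Rightarrow> complex" where
  "dz G w = (frechet_derivative G (at w) 1 - \<i> * frechet_derivative G (at w) \<i>) / 2"

definition dzbar :: "(complex \<Rightarrow> complex) \<Rightarrow> complex \<Rightarrow> complex" where
  "dzbar G w = (frechet_derivative G (at w) 1 + \<i> * frechet_derivative G (at w) \<i>) / 2"

lemma dz_eq: "(G has_derivative L) (at z) \<Longrightarrow> dz G z = (L 1 - \<i> * L \<i>) / 2"
  by (simp add: dz_def frechet_derivative_at[symmetric])

lemma dzbar_eq: "(G has_derivative L) (at z) \<Longrightarrow> dzbar G z = (L 1 + \<i> * L \<i>) / 2"
  by (simp add: dzbar_def frechet_derivative_at[symmetric])

lemma dz_cong_open: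
  assumes "open S" "z \<in> S" "\<And>w. w \<in> S \<Longrightarrow> G w = H w"
  shows "dz G z = dz H z"
  using frechet_derivative_cong_open[OF assms] by (simp add: dz_def)

lemma dzbar_cong_open:
  assumes "open S" "z \<in> S" "\<And>w. w \<in> S \<Longrightarrow> G w = H w"
  shows "dzbar G z = dzbar H z"
  using frechet_derivative_cong_open[OF assms] by (simp add: dzbar_def)

lemma dz_cmult:
  assumes "G differentiable (at z)"
  shows "dz (\<lambda>w. c * G w) z = c * dz G z"
proof -
  obtain L where L: "(G has_derivative L) (at z)"
    using assms unfolding differentiable_def by blast
  then have "((\<lambda>w. c * G w) has_derivative (\<lambda>v. c * L v)) (at z)"
    by (auto intro!: derivative_eq_intros)
  then show ?thesis
    by (simp add: dz_eq[OF L] dz_eq[of "\<lambda>w. c * G w"] algebra_simps)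
qed

lemma dz_compose_holomorphic:
  assumes G: "G differentiable (at (h z))" and h: "(h has_field_derivative h') (at z)"
  shows "dz (G \<circ> h) z = h' * dz G (h z)"
proof -
  obtain L where L: "(G has_derivative L) (at (h z))"
    using G unfolding differentiable_def by blast
  have D: "((G \<circ> h) has_derivative (\<lambda>v. L (h' * v))) (at z)"
    using has_derivative_compose[OF has_field_derivative_imp_has_derivative[OF h] L] by (simp add: o_def)
  have decomp: "L h' = Re h' *\<^sub>R L 1 + Im h' *\<^sub>R L \<i>" "L (\<i> * h') = - Im h' *\<^sub>R L 1 + Re h' *\<^sub>R L \<i>"
    using linear_complex_decomp[OF has_derivative_linear[OF L], of h']
      linear_complex_decomp[OF has_derivative_linear[OF L], of "\<i> * h'"] by simp_all
  show ?thesis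
    unfolding dz_eq[OF D] dz_eq[OF L] mult_1_right mult.commute[of h' \<i>] decomp
    by (simp add: scaleR_conv_of_real complex_eq_iff algebra_simps)
qed

lemma dz_cnj_quotient:
  fixes N M :: "complex \<Rightarrow> complex"
  assumes N: "N differentiable (at z)" and M: "M differentiable (at z)" and "M z \<noteq> 0"
  shows "(\<lambda>w. cnj (N w / (2 * M w))) differentiable (at z)"
    and "dz (\<lambda>w. cnj (N w / (2 * M w))) z = cnj ((dzbar N z * M z - N z * dzbar M z) / (2 * (M z)\<^sup>2))"
proof -
  obtain LN LM where LN: "(N has_derivative LN) (at z)" and LM: "(M has_derivative LM) (at z)"
    using N M unfolding differentiable_def by blast
  have "((\<lambda>w. N w / (2 * M w)) has_derivative (\<lambda>h. (LN h * M z - N z * LM h) / (2 * (M z)\<^sup>2))) (at z)"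
    using LN LM \<open>M z \<noteq> 0\<close>
    by (auto intro!: derivative_eq_intros simp: fun_eq_iff field_simps power2_eq_square)
  from bounded_linear.has_derivative[OF bounded_linear_cnj this]
  have Q: "((\<lambda>w. cnj (N w / (2 * M w))) has_derivative (\<lambda>h. cnj ((LN h * M z - N z * LM h) / (2 * (M z)\<^sup>2)))) (at z)" .
  then show "(\<lambda>w. cnj (N w / (2 * M w))) differentiable (at z)"
    unfolding differentiable_def by blast
  show "dz (\<lambda>w. cnj (N w / (2 * M w))) z = cnj ((dzbar N z * M z - N z * dzbar M z) / (2 * (M z)\<^sup>2))"
    unfolding dz_eq[OF Q] dzbar_eq[OF LN] dzbar_eq[OF LM] using \<open>M z \<noteq> 0\<close> by (simp add: field_simps)
qed

(* The k-th component of (A - i B) / 2 translated from P to the identity; for A = \<partial>\<^sub>x F and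
   B = \<partial>\<^sub>y F at P = F z this is nil_phi F z k, see nil_phi_eq_left_dz. *)
definition left_dz :: "real^3 \<Rightarrow> real^3 \<Rightarrow> real^3 \<Rightarrow> 3 \<Rightarrow> complex" where
  "left_dz P A B k = (of_real (nil_dL (- P) A $ k) - \<i> * of_real (nil_dL (- P) B $ k)) / 2"

lemma left_dz_nth [simp]:
  "left_dz P A B 1 = (of_real (A$1) - \<i> * of_real (B$1)) / 2"
  "left_dz P A B 2 = (of_real (A$2) - \<i> * of_real (B$2)) / 2"
  "left_dz P A B 3 = (of_real (A$3 + (P$2 * A$1 - P$1 * A$2) / 2)
                      - \<i> * of_real (B$3 + (P$2 * B$1 - P$1 * B$2) / 2)) / 2"
  by (simp_all add: left_dz_def algebra_simps)

lemma nil_phi_eq_left_dz: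
  assumes "(F has_derivative DF) (at z)"
  shows "nil_phi F z k = left_dz (F z) (DF 1) (DF \<i>) k"
proof -
  have "(\<lambda>w. nil_mult (nil_inv (F z)) (F w)) = (\<lambda>w. - F z + nil_dL (- F z) (F w))"
    by (simp add: nil_mult_eq_add_dL nil_inv_def)
  moreover have "((\<lambda>w. - F z + nil_dL (- F z) (F w)) has_derivative (\<lambda>v. nil_dL (- F z) (DF v))) (at z)"
    using bounded_linear.has_derivative[OF bounded_linear_nil_dL assms] by (auto intro!: derivative_eq_intros)
  ultimately show ?thesis
    unfolding nil_phi_def Let_def dx_def dy_def left_dz_def by (simp add: frechet_derivative_at[symmetric])
qed

lemma nil_phi_eq_dz_vec:
  assumes "F differentiable (at z)"
  shows "nil_phi F z 1 = dz_vec F z $ 1" "nil_phi F z 2 = dz_vec F z $ 2"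
    "nil_phi F z 3 = dz_vec F z $ 3 + (of_real (F z $ 2) * dz_vec F z $ 1 - of_real (F z $ 1) * dz_vec F z $ 2) / 2"
  using nil_phi_eq_left_dz[OF frechet_derivative_works[THEN iffD1, OF assms]]
  by (simp_all add: dz_vec_def dx_def dy_def field_simps)

lemma nil_phi_cong_open:
  assumes "open S" "z \<in> S" "\<And>w. w \<in> S \<Longrightarrow> F w = G w"
  shows "nil_phi F z k = nil_phi G z k"
proof -
  have "frechet_derivative (\<lambda>w. nil_mult (nil_inv (F z)) (F w)) (at z)
      = frechet_derivative (\<lambda>w. nil_mult (nil_inv (G z)) (G w)) (at z)"
    using assms by (intro frechet_derivative_cong_open[OF assms(1,2)]) simp
  then show ?thesis
    by (simp add: nil_phi_def dx_def dy_def Let_def)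
qed

lemma left_dz_linear_mult:
  assumes "linear L"
  shows "left_dz P (L h) (L (\<i> * h)) k = h * left_dz P (L 1) (L \<i>) k"
proof -
  let ?l = "\<lambda>v. nil_dL (- P) (L v) $ k"
  have "linear ?l"
    using linear_compose[OF linear_compose[OF assms bounded_linear.linear[OF bounded_linear_nil_dL]]
        bounded_linear.linear[OF bounded_linear_vec_nth]] by (simp add: o_def)
  then have "?l h = Re h * ?l 1 + Im h * ?l \<i>" "?l (\<i> * h) = - Im h * ?l 1 + Re h * ?l \<i>"
    using linear_complex_decomp[of ?l h] linear_complex_decomp[of ?l "\<i> * h"] by simp_all
  then show ?thesis
    unfolding left_dz_def by (simp add: complex_eq_iff algebra_simps)
qed

lemma nil_phi_compose_holomorphic:
  assumes G: "G differentiable (at (h z))" and h: "(h has_field_derivative h') (at z)"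
  shows "nil_phi (G \<circ> h) z k = h' * nil_phi G (h z) k"
proof -
  obtain DG where DG: "(G has_derivative DG) (at (h z))"
    using G unfolding differentiable_def by blast
  have "((G \<circ> h) has_derivative (\<lambda>v. DG (h' * v))) (at z)"
    using has_derivative_compose[OF has_field_derivative_imp_has_derivative[OF h] DG]
    by (simp add: o_def mult.commute)
  then have "nil_phi (G \<circ> h) z k = left_dz (G (h z)) (DG h') (DG (\<i> * h')) k"
    using nil_phi_eq_left_dz by (simp add: mult.commute)
  also have "\<dots> = h' * nil_phi G (h z) k"
    using left_dz_linear_mult[OF has_derivative_linear[OF DG]] nil_phi_eq_left_dz[OF DG] by simp
  finally show ?thesis .
qed

lemma has_derivative_nil_iso:
  "(F has_derivative DF) (at z) \<Longrightarrow>
   ((\<lambda>w. nil_iso p \<theta> (F w)) has_derivative (\<lambda>v. nil_dL p (nil_rot \<theta> (DF v)))) (at z)"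
  unfolding nil_iso_def nil_mult_eq_add_dL
  by (auto intro!: derivative_eq_intros bounded_linear.has_derivative[OF bounded_linear_nil_dL]
                   bounded_linear.has_derivative[OF bounded_linear_nil_rot])

lemma differentiable_nil_iso:
  "F differentiable (at z) \<Longrightarrow> (\<lambda>w. nil_iso p \<theta> (F w)) differentiable (at z)"
  using has_derivative_nil_iso unfolding differentiable_def by blast

lemma nil_dL_nil_iso_nth_3:
  "nil_dL (- nil_iso p \<theta> x) (nil_dL p (nil_rot \<theta> v)) $ 3 = nil_dL (- x) v $ 3"
  by (simp add: nil_iso_def nil_mult_def field_simps) (use sin_cos_squared_add3[of \<theta>] in algebra)

lemma nil_phi_nil_iso:
  assumes "F differentiable (at z)"
  shows "nil_phi (\<lambda>w. nil_iso p \<theta> (F w)) z 1 = of_real (cos \<theta>) * nil_phi F z 1 - of_real (sin \<theta>) * nil_phi F z 2"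
    and "nil_phi (\<lambda>w. nil_iso p \<theta> (F w)) z 2 = of_real (sin \<theta>) * nil_phi F z 1 + of_real (cos \<theta>) * nil_phi F z 2"
    and "nil_phi (\<lambda>w. nil_iso p \<theta> (F w)) z 3 = nil_phi F z 3"
proof -
  obtain DF where DF: "(F has_derivative DF) (at z)"
    using assms unfolding differentiable_def by blast
  note iso = nil_phi_eq_left_dz[OF has_derivative_nil_iso[OF DF]] and F = nil_phi_eq_left_dz[OF DF]
  show "nil_phi (\<lambda>w. nil_iso p \<theta> (F w)) z 1 = of_real (cos \<theta>) * nil_phi F z 1 - of_real (sin \<theta>) * nil_phi F z 2"
    and "nil_phi (\<lambda>w. nil_iso p \<theta> (F w)) z 2 = of_real (sin \<theta>) * nil_phi F z 1 + of_real (cos \<theta>) * nil_phi F z 2"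
    unfolding iso F by (simp_all add: field_simps)
  show "nil_phi (\<lambda>w. nil_iso p \<theta> (F w)) z 3 = nil_phi F z 3"
    unfolding iso F left_dz_def by (simp only: nil_dL_nil_iso_nth_3)
qed

lemma left_dz_eq_imp_nil_dL_eq:
  assumes L: "linear L1" "linear L2"
    and eq: "\<And>k. left_dz P (L1 1) (L1 \<i>) k = left_dz Q (L2 1) (L2 \<i>) k"
  shows "nil_dL (- P) (L1 v) = nil_dL (- Q) (L2 v)"
proof -
  have "nil_dL (- P) (L1 v) $ k = nil_dL (- Q) (L2 v) $ k" for k
  proof -
    let ?l1 = "\<lambda>v. nil_dL (- P) (L1 v) $ k" and ?l2 = "\<lambda>v. nil_dL (- Q) (L2 v) $ k"
    have "linear (\<lambda>v. nil_dL (- R) (L v) $ k)" if "linear L" for R and L :: "complex \<Rightarrow> real^3"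
      using linear_compose[OF linear_compose[OF that bounded_linear.linear[OF bounded_linear_nil_dL]]
          bounded_linear.linear[OF bounded_linear_vec_nth]] by (simp add: o_def)
    then have lin: "linear ?l1" "linear ?l2"
      using L by blast+
    have "?l1 1 = ?l2 1" "?l1 \<i> = ?l2 \<i>"
      using eq[of k] by (simp_all add: left_dz_def complex_eq_iff)
    then show ?thesis
      using linear_complex_decomp[OF lin(1), of v] linear_complex_decomp[OF lin(2), of v] by simp
  qed
  then show ?thesis
    by (simp add: vec_eq_iff)
qed

lemma has_derivative_nil_mult_neg_nth:
  fixes F G :: "'a::real_normed_vector \<Rightarrow> real^3"
  assumes dF: "(F has_derivative DF) (at z)" and dG: "(G has_derivative DG) (at z)"
    and dL: "\<And>v. nil_dL (- F z) (DF v) = nil_dL (- G z) (DG v)"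
  shows "((\<lambda>w. nil_mult (F w) (- G w) $ k) has_derivative (\<lambda>h. 0)) (at z)"
proof -
  have nth: "((\<lambda>w. F w $ j) has_derivative (\<lambda>h. DF h $ j)) (at z)"
    "((\<lambda>w. G w $ j) has_derivative (\<lambda>h. DG h $ j)) (at z)" for j
    using bounded_linear.has_derivative[OF bounded_linear_vec_nth dF]
      bounded_linear.has_derivative[OF bounded_linear_vec_nth dG] by simp_all
  have d12: "DF v $ 1 = DG v $ 1" "DF v $ 2 = DG v $ 2" for v
    using arg_cong[OF dL[of v], of "\<lambda>x. x $ 1"] arg_cong[OF dL[of v], of "\<lambda>x. x $ 2"] by simp_all
  have d3: "(\<lambda>v. DF v $ 3 - DG v $ 3
      - (DF v $ 1 * G z $ 2 + F z $ 1 * DG v $ 2 - DF v $ 2 * G z $ 1 - F z $ 2 * DG v $ 1) / 2) = (\<lambda>v. 0)"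
  proof
    fix v
    show "DF v $ 3 - DG v $ 3
        - (DF v $ 1 * G z $ 2 + F z $ 1 * DG v $ 2 - DF v $ 2 * G z $ 1 - F z $ 2 * DG v $ 1) / 2 = 0"
      using arg_cong[OF dL[of v], of "\<lambda>x. x $ 3"] by (simp add: d12 field_simps)
  qed
  consider "k = 1" | "k = 2" | "k = 3" using exhaust_3 by blast
  then show ?thesis
  proof cases
    case 1
    have "((\<lambda>w. F w $ 1 - G w $ 1) has_derivative (\<lambda>h. DF h $ 1 - DG h $ 1)) (at z)"
      by (intro derivative_intros nth)
    then show ?thesis using 1 by (simp add: d12)
  next
    case 2
    have "((\<lambda>w. F w $ 2 - G w $ 2) has_derivative (\<lambda>h. DF h $ 2 - DG h $ 2)) (at z)"
      by (intro derivative_intros nth)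
    then show ?thesis using 2 by (simp add: d12)
  next
    case 3
    have "((\<lambda>w. nil_mult (F w) (- G w) $ 3) has_derivative (\<lambda>v. DF v $ 3 - DG v $ 3
        - (DF v $ 1 * G z $ 2 + F z $ 1 * DG v $ 2 - DF v $ 2 * G z $ 1 - F z $ 2 * DG v $ 1) / 2)) (at z)"
      by (auto intro!: derivative_eq_intros nth simp: fun_eq_iff field_simps)
    then show ?thesis using 3 d3 by simp
  qed
qed

lemma nil_phi_eq_imp_left_translate:
  fixes F G :: "complex \<Rightarrow> real^3"
  assumes B: "convex B" "open B"
    and F: "\<And>z. z \<in> B \<Longrightarrow> F differentiable (at z)" and G: "\<And>z. z \<in> B \<Longrightarrow> G differentiable (at z)"
    and phi: "\<And>z k. z \<in> B \<Longrightarrow> nil_phi F z k = nil_phi G z k"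
  shows "\<exists>a. \<forall>z\<in>B. F z = nil_mult a (G z)"
proof -
  have "\<exists>c. \<forall>z\<in>B. nil_mult (F z) (- G z) $ k = c" for k
  proof (rule has_derivative_zero_constant[OF B(1)])
    fix z assume z: "z \<in> B"
    have dF: "(F has_derivative frechet_derivative F (at z)) (at z)"
      and dG: "(G has_derivative frechet_derivative G (at z)) (at z)"
      using F[OF z] G[OF z] by (simp_all add: frechet_derivative_works)
    have "nil_dL (- F z) (frechet_derivative F (at z) v) = nil_dL (- G z) (frechet_derivative G (at z) v)" for v
      using phi[OF z] unfolding nil_phi_eq_left_dz[OF dF] nil_phi_eq_left_dz[OF dG]
      by (rule left_dz_eq_imp_nil_dL_eq[OF has_derivative_linear[OF dF] has_derivative_linear[OF dG]])
    then have "((\<lambda>w. nil_mult (F w) (- G w) $ k) has_derivative (\<lambda>h. 0)) (at z)"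
      by (rule has_derivative_nil_mult_neg_nth[OF dF dG])
    then show "((\<lambda>w. nil_mult (F w) (- G w) $ k) has_derivative (\<lambda>h. 0)) (at z within B)"
      by (rule has_derivative_at_withinI)
  qed
  then obtain c where c: "\<forall>k. \<forall>z\<in>B. nil_mult (F z) (- G z) $ k = c k"
    by metis
  have "F z = nil_mult (vec_lambda c) (G z)" if "z \<in> B" for z
  proof -
    have "nil_mult (F z) (- G z) = vec_lambda c"
      using c that by (simp add: vec_eq_iff)
    then show ?thesis
      using nil_mult_right_inverse[of "F z" "G z"] by simp
  qed
  then show ?thesis by blast
qed

section \<open>Spinors, the Gauss map and minimality\<close>

(* For spinor data \<psi>1, \<psi>2 this is \<psi>1\<^sup>2, see nil_mu_eq and spinor_data_imp_phi_of_gauss. *)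
definition nil_mu :: "(complex \<Rightarrow> real^3) \<Rightarrow> complex \<Rightarrow> complex" where
  "nil_mu F w = - (nil_phi F w 1 + \<i> * nil_phi F w 2) / 2"

(* The components of \<phi> in terms of \<mu> = \<psi>1\<^sup>2 and the Gauss map G = \<psi>2 / cnj \<psi>1. *)
definition phi_of_gauss :: "complex \<Rightarrow> complex \<Rightarrow> 3 \<Rightarrow> complex" where
  "phi_of_gauss \<mu> G k =
     (if k = 1 then \<mu> * ((cnj G)\<^sup>2 - 1) else if k = 2 then \<i> * \<mu> * ((cnj G)\<^sup>2 + 1) else 2 * \<mu> * cnj G)"

lemma one_minus_mult_cnj_neq_0: "cmod w < 1 \<Longrightarrow> 1 - w * cnj w \<noteq> 0"
proof
  assume w: "cmod w < 1" "1 - w * cnj w = 0"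
  then have "(of_real (cmod w))\<^sup>2 = (1::complex)"
    using complex_norm_square[of w] by simp
  then have "(cmod w)\<^sup>2 = 1"
    by (metis of_real_eq_1_iff of_real_power)
  with w(1) show False
    by (simp add: abs_square_eq_1)
qed

lemma phi_of_gauss_nth [simp]:
  "phi_of_gauss \<mu> G 1 = \<mu> * ((cnj G)\<^sup>2 - 1)"
  "phi_of_gauss \<mu> G 2 = \<i> * \<mu> * ((cnj G)\<^sup>2 + 1)"
  "phi_of_gauss \<mu> G 3 = 2 * \<mu> * cnj G"
  by (simp_all add: phi_of_gauss_def)

lemma spinor_data_imp_phi_of_gauss:
  assumes "spinor_data F z \<psi>1 \<psi>2" "\<psi>1 \<noteq> 0"
  shows "nil_phi F z k = phi_of_gauss (\<psi>1\<^sup>2) (\<psi>2 / cnj \<psi>1) k"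
proof -
  have "cnj (\<psi>2 / cnj \<psi>1) = cnj \<psi>2 / \<psi>1" by simp
  then have "phi_of_gauss (\<psi>1\<^sup>2) (\<psi>2 / cnj \<psi>1) 1 = (cnj \<psi>2)\<^sup>2 - \<psi>1\<^sup>2"
    "phi_of_gauss (\<psi>1\<^sup>2) (\<psi>2 / cnj \<psi>1) 2 = \<i> * ((cnj \<psi>2)\<^sup>2 + \<psi>1\<^sup>2)"
    "phi_of_gauss (\<psi>1\<^sup>2) (\<psi>2 / cnj \<psi>1) 3 = 2 * \<psi>1 * cnj \<psi>2"
    using \<open>\<psi>1 \<noteq> 0\<close> by (simp_all add: field_simps power2_eq_square)
  moreover have "k = 1 \<or> k = 2 \<or> k = 3" by (rule exhaust_3)
  ultimately show ?thesis
    using assms(1) unfolding spinor_data_def by auto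
qed

lemma nil_mu_eq:
  assumes "\<And>k. nil_phi F z k = phi_of_gauss \<mu> G k"
  shows "nil_mu F z = \<mu>"
  by (simp add: nil_mu_def assms field_simps)

lemma phi_of_gauss_cancel:
  assumes "\<And>k. phi_of_gauss \<mu> G k = phi_of_gauss \<mu>' G' k" "\<mu> \<noteq> 0"
  shows "\<mu>' = \<mu>" "G' = G"
proof -
  have "- (phi_of_gauss \<mu> G 1 + \<i> * phi_of_gauss \<mu> G 2) / 2 = \<mu>"
    "- (phi_of_gauss \<mu>' G' 1 + \<i> * phi_of_gauss \<mu>' G' 2) / 2 = \<mu>'"
    by (simp_all add: field_simps)
  then show "\<mu>' = \<mu>" using assms(1) by metis
  then have "2 * \<mu> * cnj G' = 2 * \<mu> * cnj G"
    using assms(1)[of 3] by (metis phi_of_gauss_nth(3))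
  then have "cnj G' = cnj G" using \<open>\<mu> \<noteq> 0\<close> by simp
  then show "G' = G" by simp
qed

lemma phi_of_gauss_cmult: "c * phi_of_gauss \<mu> G k = phi_of_gauss (c * \<mu>) G k"
  by (simp add: phi_of_gauss_def)

lemma phi_of_gauss_rotate:
  "phi_of_gauss (cis \<theta> * \<mu>) (cis \<theta> * G) 1 = of_real (cos \<theta>) * phi_of_gauss \<mu> G 1 - of_real (sin \<theta>) * phi_of_gauss \<mu> G 2"
  "phi_of_gauss (cis \<theta> * \<mu>) (cis \<theta> * G) 2 = of_real (sin \<theta>) * phi_of_gauss \<mu> G 1 + of_real (cos \<theta>) * phi_of_gauss \<mu> G 2"
  "phi_of_gauss (cis \<theta> * \<mu>) (cis \<theta> * G) 3 = phi_of_gauss \<mu> G 3"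
proof -
  have c: "cis \<theta> = of_real (cos \<theta>) + \<i> * of_real (sin \<theta>)" "cnj (cis \<theta>) = of_real (cos \<theta>) - \<i> * of_real (sin \<theta>)"
    by (simp_all add: complex_eq_iff)
  have cs: "(of_real (cos \<theta>))\<^sup>2 + (of_real (sin \<theta>))\<^sup>2 = (1::complex)" "\<i> * \<i> = -1"
    by (simp_all flip: of_real_power of_real_add)
  show "phi_of_gauss (cis \<theta> * \<mu>) (cis \<theta> * G) 1 = of_real (cos \<theta>) * phi_of_gauss \<mu> G 1 - of_real (sin \<theta>) * phi_of_gauss \<mu> G 2"
    unfolding phi_of_gauss_nth complex_cnj_mult c(2) unfolding c(1) using cs by algebra
  show "phi_of_gauss (cis \<theta> * \<mu>) (cis \<theta> * G) 2 = of_real (sin \<theta>) * phi_of_gauss \<mu> G 1 + of_real (cos \<theta>) * phi_of_gauss \<mu> G 2"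
    unfolding phi_of_gauss_nth complex_cnj_mult c(2) unfolding c(1) using cs by algebra
  show "phi_of_gauss (cis \<theta> * \<mu>) (cis \<theta> * G) 3 = phi_of_gauss \<mu> G 3"
    by (simp add: cis_cnj cis_mult mult.left_commute)
qed

lemma nil_phi_nil_iso_phi_of_gauss:
  assumes "F differentiable (at z)" "\<And>k. nil_phi F z k = phi_of_gauss \<mu> G k"
  shows "nil_phi (\<lambda>w. nil_iso p \<theta> (F w)) z k = phi_of_gauss (cis \<theta> * \<mu>) (cis \<theta> * G) k"
proof -
  have "k = 1 \<or> k = 2 \<or> k = 3" by (rule exhaust_3)
  then show ?thesis
    using nil_phi_nil_iso[OF assms(1)] phi_of_gauss_rotate assms(2) by auto
qed

lemma nil_inner_pos:
  assumes "v \<noteq> 0"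
  shows "nil_inner x v v > 0"
proof -
  have eq: "nil_inner x v v = (v$1)\<^sup>2 + (v$2)\<^sup>2 + (v$3 + (x$2 * v$1 - x$1 * v$2) / 2)\<^sup>2"
    by (simp add: nil_inner_def power2_eq_square)
  show ?thesis
  proof (cases "v$1 = 0 \<and> v$2 = 0")
    case True
    then have "v$3 \<noteq> 0"
      using assms by (metis exhaust_3 vec_eq_iff zero_index)
    with True show ?thesis unfolding eq by simp
  next
    case False
    then have "(v$1)\<^sup>2 + (v$2)\<^sup>2 > 0"
      by (simp add: sum_power2_gt_zero_iff)
    then show ?thesis unfolding eq by (simp add: add_pos_nonneg)
  qed
qed

lemma minimal_imp_nil_tension_zero:
  assumes "conformal_immersion_at F z" "nil_mean_curvature_vector F z = 0" "F differentiable (at z)"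
  shows "nil_tension F z = 0"
proof -
  have "linear (frechet_derivative F (at z))"
    using assms(3) frechet_derivative_works has_derivative_linear by blast
  moreover have "inj (frechet_derivative F (at z))"
    using assms(1) unfolding conformal_immersion_at_def by blast
  ultimately have "dx F z \<noteq> 0"
    unfolding dx_def by (metis injD linear_0 one_neq_zero)
  then have "nil_inner (F z) (dx F z) (dx F z) > 0"
    by (rule nil_inner_pos)
  then show ?thesis
    using assms(2) unfolding nil_mean_curvature_vector_def by simp
qed

lemma has_derivative_dz_vec_nth:
  assumes "(dx F has_derivative D1) (at z)" "(dy F has_derivative D2) (at z)"
  shows "((\<lambda>w. dz_vec F w $ k) has_derivative (\<lambda>h. (of_real (D1 h $ k) - \<i> * of_real (D2 h $ k)) / 2)) (at z)"
  unfolding dz_vec_def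
  by (auto intro!: derivative_eq_intros bounded_linear.has_derivative[OF bounded_linear_vec_nth] assms)

(* By the symmetry of second derivatives, dzbar of dz_vec F is a quarter of the Laplacian of F. *)
lemma dzbar_nil_phi_terms:
  fixes F :: "complex \<Rightarrow> real^3"
  assumes S: "open S" "z \<in> S" "\<forall>w\<in>S. F differentiable (at w)"
    and F: "dx F differentiable (at z)" "dy F differentiable (at z)"
  defines "a \<equiv> dz_vec F z"
    and "c \<equiv> \<lambda>k. of_real (dx (dx F) z $ k + dy (dy F) z $ k) / 4"
  shows "nil_mu F differentiable (at z)" "(\<lambda>w. nil_phi F w 3) differentiable (at z)"
    "dzbar (nil_mu F) z = - (c 1 + \<i> * c 2) / 2"
    "dzbar (\<lambda>w. nil_phi F w 3) z
       = c 3 + (cnj (a$2) * a$1 - cnj (a$1) * a$2) / 2 + (of_real (F z $ 2) * c 1 - of_real (F z $ 1) * c 2) / 2"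
proof -
  define M where "M = (\<lambda>w. - (dz_vec F w $ 1 + \<i> * dz_vec F w $ 2) / 2)"
  define N where "N = (\<lambda>w. dz_vec F w $ 3 + (of_real (F w $ 2) * dz_vec F w $ 1 - of_real (F w $ 1) * dz_vec F w $ 2) / 2)"
  have eq: "M w = nil_mu F w" "N w = nil_phi F w 3" if "w \<in> S" for w
    using nil_phi_eq_dz_vec[OF bspec[OF S(3) that]] by (simp_all add: M_def N_def nil_mu_def)
  obtain DF D1 D2 where DF: "(F has_derivative DF) (at z)"
    and D1: "(dx F has_derivative D1) (at z)" and D2: "(dy F has_derivative D2) (at z)"
    using S(2,3) F unfolding differentiable_def by blast
  note a = has_derivative_dz_vec_nth[OF D1 D2]
    and f = bounded_linear.has_derivative[OF bounded_linear_vec_nth DF]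
  let ?L = "\<lambda>k h. (of_real (D1 h $ k) - \<i> * of_real (D2 h $ k)) / 2"
  have hM: "(M has_derivative (\<lambda>h. - (?L 1 h + \<i> * ?L 2 h) / 2)) (at z)"
    unfolding M_def by (auto intro!: derivative_eq_intros a)
  have hN: "(N has_derivative (\<lambda>h. ?L 3 h + (of_real (DF h $ 2) * dz_vec F z $ 1 + of_real (F z $ 2) * ?L 1 h
      - (of_real (DF h $ 1) * dz_vec F z $ 2 + of_real (F z $ 1) * ?L 2 h)) / 2)) (at z)"
    unfolding N_def by (auto intro!: derivative_eq_intros a f)
  have "M differentiable (at z)" "N differentiable (at z)"
    using hM hN unfolding differentiable_def by blast+
  then show "nil_mu F differentiable (at z)" "(\<lambda>w. nil_phi F w 3) differentiable (at z)"
    using differentiable_cong_open[OF _ S(1,2)] eq by metis+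
  have D: "D1 \<i> = D2 1" "D1 1 = dx (dx F) z" "D2 \<i> = dy (dy F) z" "DF 1 = dx F z" "DF \<i> = dy F z"
    using dy_dx_eq_dx_dy[OF S(1,2) bspec[OF S(3)] F] unfolding dx_def dy_def frechet_derivative_at[OF D1]
      frechet_derivative_at[OF D2] frechet_derivative_at[OF DF] by simp_all
  have "dzbar M z = - (c 1 + \<i> * c 2) / 2"
    unfolding dzbar_eq[OF hM] c_def D(1) D(2)[symmetric] D(3)[symmetric] by (simp add: field_simps)
  then show "dzbar (nil_mu F) z = - (c 1 + \<i> * c 2) / 2"
    using dzbar_cong_open[OF S(1,2), of M] eq by simp
  have "dzbar N z = c 3 + (cnj (a$2) * a$1 - cnj (a$1) * a$2) / 2 + (of_real (F z $ 2) * c 1 - of_real (F z $ 1) * c 2) / 2"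
    unfolding dzbar_eq[OF hN] c_def a_def D(1) D(2)[symmetric] D(3)[symmetric]
    by (simp add: dz_vec_def D(4,5)[symmetric] field_simps)
  then show "dzbar (\<lambda>w. nil_phi F w 3) z
      = c 3 + (cnj (a$2) * a$1 - cnj (a$1) * a$2) / 2 + (of_real (F z $ 2) * c 1 - of_real (F z $ 1) * c 2) / 2"
    using dzbar_cong_open[OF S(1,2), of N] eq by simp
qed

(* Here \<chi>k stands for cnj \<psi>k, a for dz_vec F, b for its conjugate, and c k is the value of
   dzbar (dz_vec F) $ k imposed by the harmonic map equation; the left-hand side is then the
   conjugate of dz (cnj (\<phi>\<^sub>3 / 2 \<mu>)). *)
lemma minimal_gauss_identity_algebraic:
  fixes \<psi>1 \<psi>2 \<chi>1 \<chi>2 :: complex and a b :: "complex^3" and P :: "real^3"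
  assumes "\<psi>1 \<noteq> 0" "\<chi>1 \<noteq> 0"
    and a: "a$1 = \<chi>2\<^sup>2 - \<psi>1\<^sup>2" "a$2 = \<i> * (\<chi>2\<^sup>2 + \<psi>1\<^sup>2)"
      "a$3 = 2 * \<psi>1 * \<chi>2 - (of_real (P$2) * a$1 - of_real (P$1) * a$2) / 2"
    and b: "b$1 = \<psi>2\<^sup>2 - \<chi>1\<^sup>2" "b$2 = - \<i> * (\<psi>2\<^sup>2 + \<chi>1\<^sup>2)"
      "b$3 = 2 * \<chi>1 * \<psi>2 - (of_real (P$2) * b$1 - of_real (P$1) * b$2) / 2"
  defines "c \<equiv> \<lambda>k. - nil_gamma P a b $ k"
  shows "((c 3 + (b$2 * a$1 - b$1 * a$2) / 2 + (of_real (P$2) * c 1 - of_real (P$1) * c 2) / 2) * \<psi>1\<^sup>2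
          - 2 * \<psi>1 * \<chi>2 * (- (c 1 + \<i> * c 2) / 2)) / (2 * (\<psi>1\<^sup>2)\<^sup>2)
       = \<i> * \<chi>1\<^sup>2 * (1 - (\<psi>2 / \<chi>1) * (\<chi>2 / \<psi>1))\<^sup>2 / 2"
  using assms(1,2) unfolding c_def nil_gamma_nth a b
  by (simp add: field_simps) algebra

lemma dz_vec_spinor_data:
  assumes "spinor_data F z \<psi>1 \<psi>2" "F differentiable (at z)"
  shows "dz_vec F z $ 1 = (cnj \<psi>2)\<^sup>2 - \<psi>1\<^sup>2" "dz_vec F z $ 2 = \<i> * ((cnj \<psi>2)\<^sup>2 + \<psi>1\<^sup>2)"
    "dz_vec F z $ 3 = 2 * \<psi>1 * cnj \<psi>2
       - (of_real (F z $ 2) * dz_vec F z $ 1 - of_real (F z $ 1) * dz_vec F z $ 2) / 2"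
  using assms(1) nil_phi_eq_dz_vec[OF assms(2)] unfolding spinor_data_def by (auto simp: eq_diff_eq)

lemma minimal_dz_vec_laplacian:
  assumes "nil_tension F z = 0"
  shows "of_real (dx (dx F) z $ k + dy (dy F) z $ k) / 4
       = - nil_gamma (F z) (dz_vec F z) (\<chi> i. cnj (dz_vec F z $ i)) $ k"
proof -
  have "of_real (dx (dx F) z $ k + dy (dy F) z $ k) = - 4 * nil_gamma (F z) (dz_vec F z) (\<chi> i. cnj (dz_vec F z $ i)) $ k"
    using nil_tension_eq[of F z k] assms by (simp add: eq_neg_iff_add_eq_0 add.assoc)
  then show ?thesis by simp
qed

lemma minimal_dzbar_quotient_spinor:
  fixes F :: "complex \<Rightarrow> real^3"
  assumes S: "open S" "z \<in> S" "\<forall>w\<in>S. F differentiable (at w)"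
    and F: "dx F differentiable (at z)" "dy F differentiable (at z)"
    and minimal: "nil_tension F z = 0"
    and \<psi>: "spinor_data F z \<psi>1 \<psi>2" "\<psi>1 \<noteq> 0"
  shows "(dzbar (\<lambda>w. nil_phi F w 3) z * nil_mu F z - nil_phi F z 3 * dzbar (nil_mu F) z) / (2 * (nil_mu F z)\<^sup>2)
       = \<i> * (cnj \<psi>1)\<^sup>2 * (1 - (\<psi>2 / cnj \<psi>1) * (cnj \<psi>2 / \<psi>1))\<^sup>2 / 2"
proof -
  define a where "a = dz_vec F z"
  define b where "b = (\<chi> i. cnj (a $ i))"
  note a_eq = dz_vec_spinor_data[OF \<psi>(1) bspec[OF S(3) S(2)], folded a_def]
  have b_eq: "b$1 = \<psi>2\<^sup>2 - (cnj \<psi>1)\<^sup>2" "b$2 = - \<i> * (\<psi>2\<^sup>2 + (cnj \<psi>1)\<^sup>2)"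
    "b$3 = 2 * cnj \<psi>1 * \<psi>2 - (of_real (F z $ 2) * b$1 - of_real (F z $ 1) * b$2) / 2"
    using a_eq by (simp_all add: b_def)
  have lap: "of_real (dx (dx F) z $ k + dy (dy F) z $ k) / 4 = - nil_gamma (F z) a b $ k" for k
    using minimal_dz_vec_laplacian[OF minimal] by (simp add: a_def b_def)
  have MN: "nil_mu F z = \<psi>1\<^sup>2" "nil_phi F z 3 = 2 * \<psi>1 * cnj \<psi>2"
    using nil_mu_eq[OF spinor_data_imp_phi_of_gauss[OF \<psi>]] \<psi>(1) unfolding spinor_data_def by simp_all
  show ?thesis
    unfolding dzbar_nil_phi_terms(3,4)[OF S F] lap MN a_def[symmetric]
    using minimal_gauss_identity_algebraic[OF \<psi>(2) _ a_eq b_eq] \<psi>(2) by (simp add: b_def)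
qed

section \<open>Charts\<close>

lemma riemann_surface_chart:
  assumes "riemann_surface X A" "(U, \<phi>) \<in> A"
  shows "openin X U" "open (\<phi> ` U)" "inj_on \<phi> U"
    and "homeomorphic_map (subtopology X U) (top_of_set (\<phi> ` U)) \<phi>"
proof -
  show U: "openin X U" "open (\<phi> ` U)" and hom: "homeomorphic_map (subtopology X U) (top_of_set (\<phi> ` U)) \<phi>"
    using assms unfolding riemann_surface_def by blast+
  have "topspace (subtopology X U) = U"
    using openin_subset[OF U(1)] by auto
  then show "inj_on \<phi> U"
    using homeomorphic_imp_injective_map[OF hom] by simp
qed

lemma riemann_surface_chart_at:
  assumes "riemann_surface X A" "q \<in> topspace X"
  obtains U \<phi> where "(U, \<phi>) \<in> A" "q \<in> U"
proof -
  have "q \<in> \<Union>(fst ` A)"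
    using assms unfolding riemann_surface_def by blast
  then obtain x where "x \<in> A" "q \<in> fst x" by blast
  then show ?thesis
    using that[of "fst x" "snd x"] by simp
qed

lemma openin_chart_preimage:
  assumes "riemann_surface X A" "(U, \<phi>) \<in> A" "open B"
  shows "openin X {p \<in> U. \<phi> p \<in> B}"
proof -
  note chart = riemann_surface_chart[OF assms(1,2)]
  have "continuous_map (subtopology X U) euclidean \<phi>"
    using homeomorphic_imp_continuous_map[OF chart(4)] continuous_map_into_fulltopology by blast
  then have "openin (subtopology X U) {p \<in> topspace (subtopology X U). \<phi> p \<in> B}"
    by (rule openin_continuous_map_preimage) (use assms(3) in auto)
  moreover have "topspace (subtopology X U) = U"
    using openin_subset[OF chart(1)] by auto
  ultimately show ?thesis
    using openin_trans_full chart(1) by fastforce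
qed

lemma open_chart_image:
  assumes "riemann_surface X A" "(U, \<phi>) \<in> A" "openin X W" "W \<subseteq> U"
  shows "open (\<phi> ` W)"
proof -
  note chart = riemann_surface_chart[OF assms(1,2)]
  have "openin (subtopology X U) W"
    using openin_subtopology_Int[OF assms(3), of U] assms(4) by (simp add: Int_absorb2)
  then have "openin (top_of_set (\<phi> ` U)) (\<phi> ` W)"
    using homeomorphic_map_openness_eq[OF chart(4)] by blast
  then show ?thesis
    using chart(2) openin_open_trans by blast
qed

lemma connected_space_locally_constant:
  assumes "connected_space X"
    and loc: "\<And>q. q \<in> topspace X \<Longrightarrow> \<exists>N. openin X N \<and> q \<in> N \<and> (\<forall>p\<in>N. c p = c q)"
    and "p \<in> topspace X" "q \<in> topspace X"
  shows "c p = c q"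
proof -
  have op: "openin X {p \<in> topspace X. P (c p)}" for P
  proof (subst openin_subopen, intro ballI)
    fix p assume "p \<in> {p \<in> topspace X. P (c p)}"
    then obtain N where N: "openin X N" "p \<in> N" "\<forall>p'\<in>N. c p' = c p" and "P (c p)"
      using loc by blast
    have "N \<subseteq> {p \<in> topspace X. P (c p)}"
      using openin_subset[OF N(1)] N(3) \<open>P (c p)\<close> by auto
    with N(1,2) show "\<exists>T. openin X T \<and> p \<in> T \<and> T \<subseteq> {p \<in> topspace X. P (c p)}"
      by (intro exI[of _ N]) simp
  qed
  let ?T = "{p' \<in> topspace X. c p' = c q}"
  have "topspace X - ?T = {p' \<in> topspace X. c p' \<noteq> c q}"
    by blast
  then have "closedin X ?T"
    using op[of "\<lambda>y. y \<noteq> c q"] unfolding closedin_def by auto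
  with op[of "\<lambda>y. y = c q"] have "?T = topspace X"
    using assms(1,4) unfolding connected_space_clopen_in by blast
  with assms(3) show ?thesis by blast
qed

lemma smooth_on3_differentiable:
  assumes "smooth_on3 S F" "z \<in> S"
  shows "F differentiable (at z)" "dx F differentiable (at z)" "dy F differentiable (at z)"
  using assms(1)[unfolded smooth_on3_def, rule_format, of 2] assms(2)
  by (simp_all add: numeral_2_eq_2)

lemma conformal_minimal_chart:
  assumes "conformal_minimal_immersion X A f" "(U, \<phi>) \<in> A" "z \<in> \<phi> ` U"
  shows "local_rep f U \<phi> differentiable (at z)" "dx (local_rep f U \<phi>) differentiable (at z)"
    "dy (local_rep f U \<phi>) differentiable (at z)"
    "conformal_immersion_at (local_rep f U \<phi>) z" "nil_mean_curvature_vector (local_rep f U \<phi>) z = 0"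
  using assms smooth_on3_differentiable[of "\<phi> ` U" "local_rep f U \<phi>" z]
  unfolding conformal_minimal_immersion_def by fast+

lemma gauss_map_chart_spinors:
  assumes NV: "nowhere_vertical_upward X A f" and NG: "normal_gauss_map X A f g"
    and UA: "(U, \<phi>) \<in> A" and z: "z \<in> \<phi> ` U"
  obtains \<psi>1 \<psi>2 where "spinor_data (local_rep f U \<phi>) z \<psi>1 \<psi>2" "cmod \<psi>2 < cmod \<psi>1"
    "g (inv_into U \<phi> z) = \<psi>2 / cnj \<psi>1"
proof -
  have p: "inv_into U \<phi> z \<in> U" "\<phi> (inv_into U \<phi> z) = z"
    using z by (simp_all add: inv_into_into f_inv_into_f)
  with NG UA obtain \<psi>1 \<psi>2 where "spinor_data (local_rep f U \<phi>) z \<psi>1 \<psi>2" "g (inv_into U \<phi> z) = \<psi>2 / cnj \<psi>1"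
    unfolding normal_gauss_map_def by fastforce
  moreover from this(1) have "cmod \<psi>2 < cmod \<psi>1"
    using NV UA z unfolding nowhere_vertical_upward_def by fastforce
  ultimately show ?thesis using that by blast
qed

lemma gauss_map_chart:
  assumes NV: "nowhere_vertical_upward X A f" and NG: "normal_gauss_map X A f g"
    and UA: "(U, \<phi>) \<in> A" and z: "z \<in> \<phi> ` U"
  shows "nil_phi (local_rep f U \<phi>) z k = phi_of_gauss (nil_mu (local_rep f U \<phi>) z) (g (inv_into U \<phi> z)) k"
    and "nil_mu (local_rep f U \<phi>) z \<noteq> 0" "cmod (g (inv_into U \<phi> z)) < 1"
proof -
  obtain \<psi>1 \<psi>2 where \<psi>: "spinor_data (local_rep f U \<phi>) z \<psi>1 \<psi>2" "cmod \<psi>2 < cmod \<psi>1"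
    "g (inv_into U \<phi> z) = \<psi>2 / cnj \<psi>1"
    using gauss_map_chart_spinors[OF NV NG UA z] .
  then have "\<psi>1 \<noteq> 0" by auto
  note phi = spinor_data_imp_phi_of_gauss[OF \<psi>(1) this]
  show "nil_phi (local_rep f U \<phi>) z k = phi_of_gauss (nil_mu (local_rep f U \<phi>) z) (g (inv_into U \<phi> z)) k"
    "nil_mu (local_rep f U \<phi>) z \<noteq> 0"
    using phi nil_mu_eq[OF phi] \<psi>(3) \<open>\<psi>1 \<noteq> 0\<close> by simp_all
  show "cmod (g (inv_into U \<phi> z)) < 1"
    using \<psi>(2,3) \<open>\<psi>1 \<noteq> 0\<close> by (simp add: norm_divide)
qed

lemma nil_mu_gauss_map_dz:
  assumes RS: "riemann_surface X A" and CMI: "conformal_minimal_immersion X A f"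
    and NV: "nowhere_vertical_upward X A f" and NG: "normal_gauss_map X A f g"
    and UA: "(U, \<phi>) \<in> A" and z: "z \<in> \<phi> ` U"
  defines "G \<equiv> g \<circ> inv_into U \<phi>" and "F \<equiv> local_rep f U \<phi>"
  shows "G differentiable (at z)"
    and "nil_mu F z * (1 - G z * cnj (G z))\<^sup>2 = 2 * \<i> * dz G z"
proof -
  have S: "open (\<phi> ` U)" "z \<in> \<phi> ` U" "\<forall>w\<in>\<phi> ` U. F differentiable (at w)"
    using riemann_surface_chart(2)[OF RS UA] z conformal_minimal_chart(1)[OF CMI UA] by (simp_all add: F_def)
  note chart = conformal_minimal_chart[OF CMI UA z, folded F_def]
  note terms = dzbar_nil_phi_terms[OF S chart(2,3)]
  have G_eq: "cnj (nil_phi F w 3 / (2 * nil_mu F w)) = G w" if "w \<in> \<phi> ` U" for w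
    using gauss_map_chart(1)[OF NV NG UA that, of 3, folded F_def] gauss_map_chart(2)[OF NV NG UA that, folded F_def]
    by (simp add: G_def)
  have mu: "nil_mu F z \<noteq> 0"
    using gauss_map_chart(2)[OF NV NG UA z] by (simp add: F_def)
  note quotient = dz_cnj_quotient[OF terms(2,1) mu]
  show "G differentiable (at z)"
    by (rule differentiable_cong_open[OF quotient(1) S(1,2) G_eq])
  obtain \<psi>1 \<psi>2 where \<psi>: "spinor_data F z \<psi>1 \<psi>2" "cmod \<psi>2 < cmod \<psi>1" "G z = \<psi>2 / cnj \<psi>1"
    using gauss_map_chart_spinors[OF NV NG UA z] unfolding F_def G_def by auto
  then have "\<psi>1 \<noteq> 0" by auto
  note core = minimal_dzbar_quotient_spinor[OF S chart(2,3)
      minimal_imp_nil_tension_zero[OF chart(4,5,1)] \<psi>(1) this]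
  have "dz G z = dz (\<lambda>w. cnj (nil_phi F w 3 / (2 * nil_mu F w))) z"
    by (rule dz_cong_open[OF S(1,2) G_eq[symmetric]])
  also have "\<dots> = cnj (\<i> * (cnj \<psi>1)\<^sup>2 * (1 - G z * cnj (G z))\<^sup>2 / 2)"
    using quotient(2) core \<psi>(3) by simp
  also have "\<dots> = - \<i> * \<psi>1\<^sup>2 * (1 - G z * cnj (G z))\<^sup>2 / 2"
    by (simp add: mult.commute)
  finally show "nil_mu F z * (1 - G z * cnj (G z))\<^sup>2 = 2 * \<i> * dz G z"
    using nil_mu_eq[OF spinor_data_imp_phi_of_gauss[OF \<psi>(1) \<open>\<psi>1 \<noteq> 0\<close>]] by simp
qed

definition adapted_charts ::
    "'a topology \<Rightarrow> ('a set \<times> ('a \<Rightarrow> complex)) set \<Rightarrow> ('a \<Rightarrow> 'a)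
     \<Rightarrow> 'a set \<Rightarrow> ('a \<Rightarrow> complex) \<Rightarrow> 'a set \<Rightarrow> ('a \<Rightarrow> complex) \<Rightarrow> complex set \<Rightarrow> bool" where
  "adapted_charts X A \<gamma> U \<phi> V \<psi> S \<longleftrightarrow>
     (U, \<phi>) \<in> A \<and> (V, \<psi>) \<in> A \<and> open S \<and> S \<subseteq> \<phi> ` U \<and>
     (\<psi> \<circ> \<gamma> \<circ> inv_into U \<phi>) holomorphic_on S \<and>
     (\<forall>z\<in>S. inv_into U \<phi> z \<in> topspace X \<and> (\<psi> \<circ> \<gamma> \<circ> inv_into U \<phi>) z \<in> \<psi> ` V \<and>
        inv_into V \<psi> ((\<psi> \<circ> \<gamma> \<circ> inv_into U \<phi>) z) = \<gamma> (inv_into U \<phi> z))"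

lemma riemann_aut_adapted_charts:
  assumes RS: "riemann_surface X A" and AUT: "riemann_aut X A \<gamma>" and q: "q \<in> topspace X"
  obtains U \<phi> V \<psi> S where "adapted_charts X A \<gamma> U \<phi> V \<psi> S" "q \<in> U" "\<phi> q \<in> S"
proof -
  have cont: "continuous_map X X \<gamma>" and hol: "riemann_holomorphic X A \<gamma>"
    using AUT homeomorphic_imp_continuous_map unfolding riemann_aut_def by blast+
  have "\<gamma> q \<in> topspace X"
    using continuous_map_image_subset_topspace[OF cont] q by blast
  then obtain U \<phi> V \<psi> where UA: "(U, \<phi>) \<in> A" "q \<in> U" and VA: "(V, \<psi>) \<in> A" "\<gamma> q \<in> V"
    using riemann_surface_chart_at[OF RS q] riemann_surface_chart_at[OF RS] by metis
  define W where "W = U \<inter> {p \<in> topspace X. \<gamma> p \<in> V}"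
  have W: "openin X W" "W \<subseteq> U"
    unfolding W_def using openin_Int[OF riemann_surface_chart(1)[OF RS UA(1)]
        openin_continuous_map_preimage[OF cont riemann_surface_chart(1)[OF RS VA(1)]]] by auto
  have "(\<psi> \<circ> \<gamma> \<circ> inv_into U \<phi>) holomorphic_on \<phi> ` W"
    using hol UA(1) VA(1) unfolding riemann_holomorphic_def W_def by fast
  moreover have "inv_into U \<phi> z \<in> topspace X \<and> (\<psi> \<circ> \<gamma> \<circ> inv_into U \<phi>) z \<in> \<psi> ` V \<and>
      inv_into V \<psi> ((\<psi> \<circ> \<gamma> \<circ> inv_into U \<phi>) z) = \<gamma> (inv_into U \<phi> z)" if z: "z \<in> \<phi> ` W" for z
  proof -
    obtain p where p: "p \<in> W" "z = \<phi> p" using z by blast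
    then have "inv_into U \<phi> z = p"
      using riemann_surface_chart(3)[OF RS UA(1)] W(2) by (auto intro: inv_into_f_f)
    then show ?thesis
      using p riemann_surface_chart(3)[OF RS VA(1)] by (auto simp: W_def intro: inv_into_f_f)
  qed
  ultimately have "adapted_charts X A \<gamma> U \<phi> V \<psi> (\<phi> ` W)"
    unfolding adapted_charts_def using UA(1) VA(1) open_chart_image[OF RS UA(1) W] W(2) by blast
  moreover have "\<phi> q \<in> \<phi> ` W"
    using UA(2) VA(2) q by (auto simp: W_def)
  ultimately show ?thesis
    using that UA(2) by blast
qed

lemma adapted_charts_point:
  assumes RS: "riemann_surface X A" and ch: "adapted_charts X A \<gamma> U \<phi> V \<psi> S"
    and q: "q \<in> U" "\<phi> q \<in> S"
  shows "inv_into U \<phi> (\<phi> q) = q" "\<phi> q \<in> \<phi> ` U" "(\<psi> \<circ> \<gamma> \<circ> inv_into U \<phi>) (\<phi> q) \<in> \<psi> ` V"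
    "inv_into V \<psi> ((\<psi> \<circ> \<gamma> \<circ> inv_into U \<phi>) (\<phi> q)) = \<gamma> q"
proof -
  have UA: "(U, \<phi>) \<in> A" using ch unfolding adapted_charts_def by blast
  show iq: "inv_into U \<phi> (\<phi> q) = q"
    using riemann_surface_chart(3)[OF RS UA] q(1) by (rule inv_into_f_f)
  show "\<phi> q \<in> \<phi> ` U" using q(1) by blast
  show "(\<psi> \<circ> \<gamma> \<circ> inv_into U \<phi>) (\<phi> q) \<in> \<psi> ` V"
    "inv_into V \<psi> ((\<psi> \<circ> \<gamma> \<circ> inv_into U \<phi>) (\<phi> q)) = \<gamma> q"
    using ch q(2) iq unfolding adapted_charts_def by auto
qed

lemma nil_phi_adapted_charts:
  assumes CMI: "conformal_minimal_immersion X A f"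
    and ch: "adapted_charts X A \<gamma> U \<phi> V \<psi> S" and z: "z \<in> S"
  defines "h \<equiv> \<psi> \<circ> \<gamma> \<circ> inv_into U \<phi>"
  shows "(\<lambda>w. f (\<gamma> (inv_into U \<phi> w))) differentiable (at z)"
    and "nil_phi (\<lambda>w. f (\<gamma> (inv_into U \<phi> w))) z k = deriv h z * nil_phi (local_rep f V \<psi>) (h z) k"
proof -
  note ch = ch[unfolded adapted_charts_def, folded h_def]
  have eq: "local_rep f V \<psi> (h w) = f (\<gamma> (inv_into U \<phi> w))" if "w \<in> S" for w
    using ch that by (simp add: local_rep_def)
  have fV: "local_rep f V \<psi> differentiable (at (h z))"
    using conformal_minimal_chart(1)[OF CMI] ch z by blast
  have h: "(h has_field_derivative deriv h z) (at z)"
    using ch z by (blast intro: holomorphic_derivI)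
  have "h differentiable (at z)"
    using h field_differentiable_def field_differentiable_imp_differentiable by blast
  then have "(local_rep f V \<psi> \<circ> h) differentiable (at z)"
    using differentiable_chain_at fV by blast
  then show "(\<lambda>w. f (\<gamma> (inv_into U \<phi> w))) differentiable (at z)"
    by (rule differentiable_cong_open[of _ z S]) (use ch z eq in auto)
  have "nil_phi (\<lambda>w. f (\<gamma> (inv_into U \<phi> w))) z k = nil_phi (local_rep f V \<psi> \<circ> h) z k"
    by (rule nil_phi_cong_open[of S]) (use ch z eq in auto)
  also have "\<dots> = deriv h z * nil_phi (local_rep f V \<psi>) (h z) k"
    by (rule nil_phi_compose_holomorphic[OF fV h])
  finally show "nil_phi (\<lambda>w. f (\<gamma> (inv_into U \<phi> w))) z k = deriv h z * nil_phi (local_rep f V \<psi>) (h z) k" .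
qed

section \<open>Symmetries of the surface and of its Gauss map\<close>

lemma isometric_symmetry_imp_gauss_rotation:
  assumes RS: "riemann_surface X A" and CMI: "conformal_minimal_immersion X A f"
    and NV: "nowhere_vertical_upward X A f" and NG: "normal_gauss_map X A f g"
    and AUT: "riemann_aut X A \<gamma>"
    and H: "\<forall>q\<in>topspace X. f (\<gamma> q) = nil_iso p \<theta> (f q)" and q: "q \<in> topspace X"
  shows "g (\<gamma> q) = cis \<theta> * g q"
proof -
  obtain U \<phi> V \<psi> S where ch: "adapted_charts X A \<gamma> U \<phi> V \<psi> S" and qS: "q \<in> U" "\<phi> q \<in> S"
    using riemann_aut_adapted_charts[OF RS AUT q] .
  have UA: "(U, \<phi>) \<in> A" and VA: "(V, \<psi>) \<in> A" and S: "open S"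
    using ch unfolding adapted_charts_def by blast+
  define h where "h = \<psi> \<circ> \<gamma> \<circ> inv_into U \<phi>"
  define z where "z = \<phi> q"
  note pt = adapted_charts_point[OF RS ch qS, folded h_def z_def]
  note gauss_U = gauss_map_chart[OF NV NG UA pt(2), unfolded pt(1)]
    and gauss_V = gauss_map_chart[OF NV NG VA pt(3), unfolded pt(4)]
  have "nil_phi (\<lambda>w. f (\<gamma> (inv_into U \<phi> w))) z k
      = phi_of_gauss (deriv h z * nil_mu (local_rep f V \<psi>) (h z)) (g (\<gamma> q)) k" for k
    using nil_phi_adapted_charts(2)[OF CMI ch qS(2), of k, folded h_def z_def] gauss_V(1)
    by (simp add: phi_of_gauss_cmult)
  moreover have "nil_phi (\<lambda>w. f (\<gamma> (inv_into U \<phi> w))) z k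
      = phi_of_gauss (cis \<theta> * nil_mu (local_rep f U \<phi>) z) (cis \<theta> * g q) k" for k
  proof -
    have "nil_phi (\<lambda>w. f (\<gamma> (inv_into U \<phi> w))) z k = nil_phi (\<lambda>w. nil_iso p \<theta> (local_rep f U \<phi> w)) z k"
      by (rule nil_phi_cong_open[OF S qS(2)[folded z_def]])
        (use ch H in \<open>auto simp: adapted_charts_def local_rep_def\<close>)
    also have "\<dots> = phi_of_gauss (cis \<theta> * nil_mu (local_rep f U \<phi>) z) (cis \<theta> * g q) k"
      using nil_phi_nil_iso_phi_of_gauss[OF conformal_minimal_chart(1)[OF CMI UA pt(2)] gauss_U(1)] .
    finally show ?thesis .
  qed
  ultimately show ?thesis
    using phi_of_gauss_cancel(2)[of "cis \<theta> * nil_mu (local_rep f U \<phi>) z"] gauss_U(2) by simp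
qed

(* The factor (1 - |g|\<^sup>2)\<^sup>2 in nil_mu_gauss_map_dz is invariant under the rotation of g and nonzero. *)
lemma nil_mu_adapted_charts:
  assumes RS: "riemann_surface X A" and CMI: "conformal_minimal_immersion X A f"
    and NV: "nowhere_vertical_upward X A f" and NG: "normal_gauss_map X A f g"
    and ch: "adapted_charts X A \<gamma> U \<phi> V \<psi> S" and z: "z \<in> S"
    and H: "\<forall>q\<in>topspace X. g (\<gamma> q) = cis \<theta> * g q"
  defines "h \<equiv> \<psi> \<circ> \<gamma> \<circ> inv_into U \<phi>"
  shows "deriv h z * nil_mu (local_rep f V \<psi>) (h z) = cis \<theta> * nil_mu (local_rep f U \<phi>) z"
proof -
  note ch' = ch[unfolded adapted_charts_def, folded h_def]
  have UA: "(U, \<phi>) \<in> A" and VA: "(V, \<psi>) \<in> A" and S: "open S" and zU: "z \<in> \<phi> ` U"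
    and hz: "h z \<in> \<psi> ` V" and hol: "h holomorphic_on S"
    using ch' z by blast+
  define gU where "gU = g \<circ> inv_into U \<phi>"
  define gV where "gV = g \<circ> inv_into V \<psi>"
  have rot: "gV (h w) = cis \<theta> * gU w" if "w \<in> S" for w
    using ch' that H by (simp add: gU_def gV_def)
  note CU = nil_mu_gauss_map_dz[OF RS CMI NV NG UA zU, folded gU_def]
    and CV = nil_mu_gauss_map_dz[OF RS CMI NV NG VA hz, folded gV_def]
  have "deriv h z * dz gV (h z) = dz (gV \<circ> h) z"
    using dz_compose_holomorphic[OF CV(1) holomorphic_derivI[OF hol S z]] by simp
  also have "\<dots> = dz (\<lambda>w. cis \<theta> * gU w) z"
    by (rule dz_cong_open[OF S z]) (simp add: rot)
  also have "\<dots> = cis \<theta> * dz gU z"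
    by (rule dz_cmult[OF CU(1)])
  finally have dz_eq: "deriv h z * dz gV (h z) = cis \<theta> * dz gU z" .
  have same: "gV (h z) * cnj (gV (h z)) = gU z * cnj (gU z)"
  proof -
    have "cis \<theta> * cnj (cis \<theta>) = 1" by (simp add: cis_cnj cis_mult)
    moreover have "cnj (gV (h z)) = cnj (cis \<theta>) * cnj (gU z)" by (simp add: rot[OF z])
    ultimately show ?thesis using rot[OF z] by algebra
  qed
  have "(1 - gU z * cnj (gU z))\<^sup>2 \<noteq> 0"
    using one_minus_mult_cnj_neq_0[OF gauss_map_chart(3)[OF NV NG UA zU]] by (simp add: gU_def)
  moreover have "deriv h z * nil_mu (local_rep f V \<psi>) (h z) * (1 - gU z * cnj (gU z))\<^sup>2
      = cis \<theta> * nil_mu (local_rep f U \<phi>) z * (1 - gU z * cnj (gU z))\<^sup>2"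
    using CU(2) CV(2) dz_eq same by (simp add: mult_ac)
  ultimately show ?thesis by simp
qed

lemma nil_phi_adapted_charts_rotation:
  assumes RS: "riemann_surface X A" and CMI: "conformal_minimal_immersion X A f"
    and NV: "nowhere_vertical_upward X A f" and NG: "normal_gauss_map X A f g"
    and ch: "adapted_charts X A \<gamma> U \<phi> V \<psi> S" and z: "z \<in> S"
    and H: "\<forall>q\<in>topspace X. g (\<gamma> q) = cis \<theta> * g q"
  shows "nil_phi (\<lambda>w. f (\<gamma> (inv_into U \<phi> w))) z k = nil_phi (\<lambda>w. nil_iso p \<theta> (local_rep f U \<phi> w)) z k"
proof -
  define h where "h = \<psi> \<circ> \<gamma> \<circ> inv_into U \<phi>"
  have UA: "(U, \<phi>) \<in> A" and VA: "(V, \<psi>) \<in> A" and zU: "z \<in> \<phi> ` U" and hz: "h z \<in> \<psi> ` V"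
    and inv: "inv_into V \<psi> (h z) = \<gamma> (inv_into U \<phi> z)" and top: "inv_into U \<phi> z \<in> topspace X"
    using ch z unfolding adapted_charts_def h_def by auto
  have "nil_phi (\<lambda>w. f (\<gamma> (inv_into U \<phi> w))) z k = deriv h z * nil_phi (local_rep f V \<psi>) (h z) k"
    using nil_phi_adapted_charts(2)[OF CMI ch z] by (simp add: h_def)
  also have "\<dots> = phi_of_gauss (deriv h z * nil_mu (local_rep f V \<psi>) (h z)) (cis \<theta> * g (inv_into U \<phi> z)) k"
    using gauss_map_chart(1)[OF NV NG VA hz] H top by (simp add: inv phi_of_gauss_cmult)
  also have "\<dots> = phi_of_gauss (cis \<theta> * nil_mu (local_rep f U \<phi>) z) (cis \<theta> * g (inv_into U \<phi> z)) k"
    using nil_mu_adapted_charts[OF RS CMI NV NG ch z H] by (simp add: h_def)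
  also have "\<dots> = nil_phi (\<lambda>w. nil_iso p \<theta> (local_rep f U \<phi> w)) z k"
    using nil_phi_nil_iso_phi_of_gauss[OF conformal_minimal_chart(1)[OF CMI UA zU]
        gauss_map_chart(1)[OF NV NG UA zU]] by simp
  finally show ?thesis .
qed

lemma gauss_rotation_imp_local_symmetry:
  assumes RS: "riemann_surface X A" and CMI: "conformal_minimal_immersion X A f"
    and NV: "nowhere_vertical_upward X A f" and NG: "normal_gauss_map X A f g"
    and AUT: "riemann_aut X A \<gamma>"
    and H: "\<forall>q\<in>topspace X. g (\<gamma> q) = cis \<theta> * g q" and q: "q \<in> topspace X"
  shows "\<exists>N. openin X N \<and> q \<in> N \<and>
           (\<forall>p\<in>N. nil_mult (f (\<gamma> p)) (- nil_rot \<theta> (f p)) = nil_mult (f (\<gamma> q)) (- nil_rot \<theta> (f q)))"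
proof -
  obtain U \<phi> V \<psi> S where ch: "adapted_charts X A \<gamma> U \<phi> V \<psi> S" and qS: "q \<in> U" "\<phi> q \<in> S"
    using riemann_aut_adapted_charts[OF RS AUT q] .
  have UA: "(U, \<phi>) \<in> A" and S: "open S" "S \<subseteq> \<phi> ` U"
    using ch unfolding adapted_charts_def by blast+
  let ?f\<gamma> = "\<lambda>w. f (\<gamma> (inv_into U \<phi> w))" and ?f\<rho> = "\<lambda>w. nil_iso 0 \<theta> (local_rep f U \<phi> w)"
  obtain r where r: "r > 0" "ball (\<phi> q) r \<subseteq> S"
    using S(1) qS(2) open_contains_ball by blast
  have "\<exists>a. \<forall>z\<in>ball (\<phi> q) r. ?f\<gamma> z = nil_mult a (?f\<rho> z)"
  proof (rule nil_phi_eq_imp_left_translate)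
    fix z assume "z \<in> ball (\<phi> q) r"
    then have z: "z \<in> S" using r(2) by blast
    then show "?f\<gamma> differentiable (at z)"
      by (rule nil_phi_adapted_charts(1)[OF CMI ch])
    show "?f\<rho> differentiable (at z)"
      using z S(2) by (intro differentiable_nil_iso conformal_minimal_chart(1)[OF CMI UA]) blast
    show "nil_phi ?f\<gamma> z k = nil_phi ?f\<rho> z k" for k
      by (rule nil_phi_adapted_charts_rotation[OF RS CMI NV NG ch z H])
  qed simp_all
  then obtain a where a: "\<forall>z\<in>ball (\<phi> q) r. ?f\<gamma> z = nil_mult a (?f\<rho> z)" ..
  define N where "N = {p \<in> U. \<phi> p \<in> ball (\<phi> q) r}"
  have const: "nil_mult (f (\<gamma> p)) (- nil_rot \<theta> (f p)) = a" if "p \<in> N" for p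
  proof -
    have "inv_into U \<phi> (\<phi> p) = p"
      using riemann_surface_chart(3)[OF RS UA] that by (auto simp: N_def intro: inv_into_f_f)
    moreover have "?f\<gamma> (\<phi> p) = nil_mult a (?f\<rho> (\<phi> p))"
      using a that by (simp add: N_def)
    ultimately show ?thesis
      by (simp add: local_rep_def nil_iso_zero nil_mult_cancel_right)
  qed
  have "openin X N" "q \<in> N"
    using openin_chart_preimage[OF RS UA open_ball] qS(1) r(1) by (simp_all add: N_def)
  with const show ?thesis
    by metis
qed

theorem theorem1p1:
  fixes X :: "'a topology" and A :: "('a set \<times> ('a \<Rightarrow> complex)) set"
    and f :: "'a \<Rightarrow> real^3" and g :: "'a \<Rightarrow> complex" and \<gamma> :: "'a \<Rightarrow> 'a"
  assumes "riemann_surface X A"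
    and "conformal_minimal_immersion X A f"
    and "nowhere_vertical_upward X A f"
    and "normal_gauss_map X A f g"
    and "riemann_aut X A \<gamma>"
  shows "(\<forall>p \<theta>. (\<forall>q\<in>topspace X. f (\<gamma> q) = nil_iso p \<theta> (f q)) \<longrightarrow>
                 (\<forall>q\<in>topspace X. g (\<gamma> q) = cis \<theta> * g q))
       \<and> (\<forall>\<theta>. (\<forall>q\<in>topspace X. g (\<gamma> q) = cis \<theta> * g q) \<longrightarrow>
                 (\<exists>p. \<forall>q\<in>topspace X. f (\<gamma> q) = nil_iso p \<theta> (f q)))"
proof (intro conjI allI impI)
  fix p \<theta> assume "\<forall>q\<in>topspace X. f (\<gamma> q) = nil_iso p \<theta> (f q)"
  then show "\<forall>q\<in>topspace X. g (\<gamma> q) = cis \<theta> * g q"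
    using isometric_symmetry_imp_gauss_rotation[OF assms] by blast
next
  fix \<theta> assume H: "\<forall>q\<in>topspace X. g (\<gamma> q) = cis \<theta> * g q"
  have conn: "connected_space X" and "topspace X \<noteq> {}"
    using assms(1) unfolding riemann_surface_def by blast+
  then obtain q0 where q0: "q0 \<in> topspace X" by blast
  define c where "c q = nil_mult (f (\<gamma> q)) (- nil_rot \<theta> (f q))" for q
  have "c q = c q0" if "q \<in> topspace X" for q
  proof (rule connected_space_locally_constant[OF conn _ that q0])
    fix q' assume "q' \<in> topspace X"
    then show "\<exists>N. openin X N \<and> q' \<in> N \<and> (\<forall>p\<in>N. c p = c q')"
      unfolding c_def by (rule gauss_rotation_imp_local_symmetry[OF assms H])
  qed
  then have "f (\<gamma> q) = nil_iso (c q0) \<theta> (f q)" if "q \<in> topspace X" for q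
    using nil_mult_right_inverse[of "f (\<gamma> q)" "nil_rot \<theta> (f q)"] that by (simp add: c_def nil_iso_def)
  then show "\<exists>p. \<forall>q\<in>topspace X. f (\<gamma> q) = nil_iso p \<theta> (f q)"
    by blast
qed

end
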